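(* Let $\Lambda$ be a left-artinian ring, $\mathcal{C}=\mathrm{mod}(\Lambda)$, $\mathcal{S}$ a set of (isoclasses of) simple $\Lambda$-modules and $M\in\mathcal{C}$. If $t_{\mathcal{S}}(M)\neq0$ then $\ell\ell^{t_{\mathcal{S}}}(\Omega\, t_{\mathcal{S}}(M))\leq\ell\ell^{t_{\mathcal{S}}}({}_\Lambda\Lambda)-1$.
   Context: $\mathcal{C}$ is the category of finitely generated left $\Lambda$-modules; $\Omega(N)$ denotes the first syzygy of $N$, i.e. the kernel of the projective cover $P\to N$. For a set $\mathcal{S}$ of simple modules, $\mathcal{X}_{\mathcal{S}}$ is the class of modules with a finite filtration whose factors are isomorphic to modules in $\mathcal{S}$; $\mathcal{T}_{\mathcal{S}}=\{M:\mathrm{Hom}_\Lambda(M,X)=0\ \forall X\in\mathcal{X}_{\mathcal{S}}\}$; $t_{\mathcal{S}}(M)$ is the submodule generated by images of maps $T\to M$, $T\in\mathcal{T}_{\mathcal{S}}$. $\ell\ell^{t_{\mathcal{S}}}(M)=\min\{i\geq0:t_{\mathcal{S}}\circ(\mathrm{rad}\circ t_{\mathcal{S}})^i(M)=0\}$. *)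

theory Defs
  imports Main
begin

record ('r, 'm) lmod =
  mcarrier :: "'m set"
  madd :: "'m \<Rightarrow> 'm \<Rightarrow> 'm"
  mzero :: 'm
  msmult :: "'r \<Rightarrow> 'm \<Rightarrow> 'm"

definition lmodule :: "('r::ring_1, 'm) lmod \<Rightarrow> bool" where
  "lmodule M \<longleftrightarrow>
     mzero M \<in> mcarrier M \<and>
     (\<forall>x\<in>mcarrier M. \<forall>y\<in>mcarrier M. madd M x y \<in> mcarrier M) \<and>
     (\<forall>r. \<forall>x\<in>mcarrier M. msmult M r x \<in> mcarrier M) \<and>
     (\<forall>x\<in>mcarrier M. \<forall>y\<in>mcarrier M. \<forall>z\<in>mcarrier M.
         madd M (madd M x y) z = madd M x (madd M y z)) \<and>
     (\<forall>x\<in>mcarrier M. \<forall>y\<in>mcarrier M. madd M x y = madd M y x) \<and>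
     (\<forall>x\<in>mcarrier M. madd M (mzero M) x = x) \<and>
     (\<forall>x\<in>mcarrier M. madd M x (msmult M (-1) x) = mzero M) \<and>
     (\<forall>r. \<forall>x\<in>mcarrier M. \<forall>y\<in>mcarrier M.
         msmult M r (madd M x y) = madd M (msmult M r x) (msmult M r y)) \<and>
     (\<forall>r s. \<forall>x\<in>mcarrier M. msmult M (r + s) x = madd M (msmult M r x) (msmult M s x)) \<and>
     (\<forall>r s. \<forall>x\<in>mcarrier M. msmult M (r * s) x = msmult M r (msmult M s x)) \<and>
     (\<forall>x\<in>mcarrier M. msmult M 1 x = x)"

definition sub :: "('r, 'm) lmod \<Rightarrow> 'm set \<Rightarrow> ('r, 'm) lmod" where
  "sub M N = M\<lparr>mcarrier := N\<rparr>"

definition submod :: "('r::ring_1, 'm) lmod \<Rightarrow> 'm set \<Rightarrow> bool" where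
  "submod M N \<longleftrightarrow> N \<subseteq> mcarrier M \<and> mzero M \<in> N \<and>
     (\<forall>x\<in>N. \<forall>y\<in>N. madd M x y \<in> N) \<and> (\<forall>r. \<forall>x\<in>N. msmult M r x \<in> N)"

definition span :: "('r::ring_1, 'm) lmod \<Rightarrow> 'm set \<Rightarrow> 'm set" where
  "span M A = mcarrier M \<inter> \<Inter> {N. submod M N \<and> A \<subseteq> N}"

definition fin_gen :: "('r::ring_1, 'm) lmod \<Rightarrow> bool" where
  "fin_gen M \<longleftrightarrow> (\<exists>A. finite A \<and> A \<subseteq> mcarrier M \<and> span M A = mcarrier M)"

definition lhom :: "('r::ring_1, 'm) lmod \<Rightarrow> ('r, 'n) lmod \<Rightarrow> ('m \<Rightarrow> 'n) \<Rightarrow> bool" where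
  "lhom M N f \<longleftrightarrow> (\<forall>x\<in>mcarrier M. f x \<in> mcarrier N) \<and>
     (\<forall>x\<in>mcarrier M. \<forall>y\<in>mcarrier M. f (madd M x y) = madd N (f x) (f y)) \<and>
     (\<forall>r. \<forall>x\<in>mcarrier M. f (msmult M r x) = msmult N r (f x))"

definition ker :: "('r, 'm) lmod \<Rightarrow> ('r, 'n) lmod \<Rightarrow> ('m \<Rightarrow> 'n) \<Rightarrow> 'm set" where
  "ker M N f = {x \<in> mcarrier M. f x = mzero N}"

definition simple_mod :: "('r::ring_1, 'm) lmod \<Rightarrow> bool" where
  "simple_mod M \<longleftrightarrow> lmodule M \<and> mcarrier M \<noteq> {mzero M} \<and>
     (\<forall>N. submod M N \<longrightarrow> N = {mzero M} \<or> N = mcarrier M)"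

text \<open>Universal carrier type for finitely generated modules: every finitely generated
  left 'r-module is isomorphic to one whose carrier consists of cosets of a submodule of
  the finitely supported functions nat => 'r, i.e. elements of type (nat => 'r) set.\<close>
type_synonym 'r umod = "('r, (nat \<Rightarrow> 'r) set) lmod"

text \<open>X has a finite filtration 0 = X_0 <= ... <= X_n = X whose factors X_(i+1)/X_i are
  isomorphic to members of S (isomorphism with the quotient expressed as a surjective
  homomorphism X_(i+1) -> S with kernel X_i).\<close>
definition filt_in :: "('r::ring_1) umod set \<Rightarrow> ('r, 'm) lmod \<Rightarrow> bool" where
  "filt_in \<S> X \<longleftrightarrow> (\<exists>n Xs. Xs 0 = {mzero X} \<and> Xs n = mcarrier X \<and>
     (\<forall>i\<le>n. submod X (Xs i)) \<and>
     (\<forall>i<n. Xs i \<subseteq> Xs (Suc i) \<and>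
        (\<exists>S\<in>\<S>. \<exists>f. lhom (sub X (Xs (Suc i))) S f \<and> f ` Xs (Suc i) = mcarrier S \<and>
                    ker (sub X (Xs (Suc i))) S f = Xs i)))"

definition in_X :: "('r::ring_1) umod set \<Rightarrow> ('r, 'm) lmod \<Rightarrow> bool" where
  "in_X \<S> X \<longleftrightarrow> lmodule X \<and> fin_gen X \<and> filt_in \<S> X"

definition in_T :: "('r::ring_1) umod set \<Rightarrow> ('r, 'm) lmod \<Rightarrow> bool" where
  "in_T \<S> T \<longleftrightarrow> (\<forall>X :: 'r umod. in_X \<S> X \<longrightarrow>
      (\<forall>f. lhom T X f \<longrightarrow> (\<forall>x\<in>mcarrier T. f x = mzero X)))"

definition tS :: "('r::ring_1) umod set \<Rightarrow> ('r, 'm) lmod \<Rightarrow> 'm set" where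
  "tS \<S> M = span M (\<Union> {f ` mcarrier T | (T :: 'r umod) f.
       lmodule T \<and> fin_gen T \<and> in_T \<S> T \<and> lhom T M f})"

text \<open>Radical: intersection of maximal submodules (M itself if there are none).\<close>
definition maxsub :: "('r::ring_1, 'm) lmod \<Rightarrow> 'm set \<Rightarrow> bool" where
  "maxsub M N \<longleftrightarrow> submod M N \<and> N \<noteq> mcarrier M \<and>
     (\<forall>L. submod M L \<and> N \<subseteq> L \<longrightarrow> L = N \<or> L = mcarrier M)"

definition rad :: "('r::ring_1, 'm) lmod \<Rightarrow> 'm set" where
  "rad M = mcarrier M \<inter> \<Inter> {N. maxsub M N}"

definition rad_tS :: "('r::ring_1) umod set \<Rightarrow> ('r, 'm) lmod \<Rightarrow> 'm set \<Rightarrow> 'm set" where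
  "rad_tS \<S> M N = rad (sub M (tS \<S> (sub M N)))"

definition llt :: "('r::ring_1) umod set \<Rightarrow> ('r, 'm) lmod \<Rightarrow> nat" where
  "llt \<S> M = (LEAST i. tS \<S> (sub M ((rad_tS \<S> M ^^ i) (mcarrier M))) = {mzero M})"

definition regmod :: "('r::ring_1, 'r) lmod" where
  "regmod = \<lparr>mcarrier = UNIV, madd = (+), mzero = 0, msmult = (*)\<rparr>"

definition artinian :: "('r::ring_1, 'm) lmod \<Rightarrow> bool" where
  "artinian M \<longleftrightarrow> \<not> (\<exists>I. \<forall>n. submod M (I n) \<and> I (Suc n) \<subset> I n)"

definition projective :: "('r::ring_1, 'p) lmod \<Rightarrow> bool" where
  "projective P \<longleftrightarrow> lmodule P \<and> fin_gen P \<and>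
     (\<forall>(A :: 'r umod) (B :: 'r umod) g h.
        lmodule A \<and> fin_gen A \<and> lmodule B \<and> fin_gen B \<and>
        lhom A B g \<and> g ` mcarrier A = mcarrier B \<and> lhom P B h \<longrightarrow>
        (\<exists>k. lhom P A k \<and> (\<forall>x\<in>mcarrier P. g (k x) = h x)))"

definition superfluous :: "('r::ring_1, 'm) lmod \<Rightarrow> 'm set \<Rightarrow> bool" where
  "superfluous M K \<longleftrightarrow> submod M K \<and>
     (\<forall>L. submod M L \<and> span M (K \<union> L) = mcarrier M \<longrightarrow> L = mcarrier M)"

definition proj_cover :: "('r::ring_1, 'p) lmod \<Rightarrow> ('r, 'n) lmod \<Rightarrow> ('p \<Rightarrow> 'n) \<Rightarrow> bool" where
  "proj_cover P N f \<longleftrightarrow> projective P \<and> lhom P N f \<and> f ` mcarrier P = mcarrier N \<and>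
     superfluous P (ker P N f)"

end

theory Submission
  imports Defs
begin

text \<open>Let P be the projective cover of t_S(M), with kernel K = \<Omega> t_S(M). A nonzero map from P
  to a simple module S in \<S> kills rad P, which contains the superfluous submodule K, so it factors
  through t_S(M); but t_S(M) admits no nonzero map to a module filtered by \<S>. Hence every map from P
  to such a module vanishes, t_S(P) = P, and the first step of rad \<circ> t_S takes P to rad P,
  which contains K. A projective module is cogenerated by \<Lambda>, and a module cogenerated by N
  vanishes at every stage of the t_S-Loewy series at which N does. Applying this to P and
  \<Lambda>, then to K inside rad P, gives ll(K) \<le> ll(\<Lambda>) - 1. That ll(\<Lambda>) is finite
  is where the artinian hypothesis enters: a nonzero left ideal has a proper radical, by
  nilpotency of the Jacobson radical and Nakayama's lemma.\<close>

section \<open>Modules and homomorphisms\<close>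

lemma sub_simps [simp]:
  "mcarrier (sub M N) = N" "madd (sub M N) = madd M" "mzero (sub M N) = mzero M"
  "msmult (sub M N) = msmult M" "sub (sub M A) B = sub M B" "sub M (mcarrier M) = M"
  by (auto simp: sub_def)

context
  fixes M :: "('r::ring_1, 'm) lmod"
  assumes M: "lmodule M"
begin

lemma mzero_closed [simp]: "mzero M \<in> mcarrier M"
  using M unfolding lmodule_def by meson

lemma madd_closed [simp]: "x \<in> mcarrier M \<Longrightarrow> y \<in> mcarrier M \<Longrightarrow> madd M x y \<in> mcarrier M"
  using M unfolding lmodule_def by meson

lemma msmult_closed [simp]: "x \<in> mcarrier M \<Longrightarrow> msmult M r x \<in> mcarrier M"
  using M unfolding lmodule_def by meson

lemma madd_assoc:
  "x \<in> mcarrier M \<Longrightarrow> y \<in> mcarrier M \<Longrightarrow> z \<in> mcarrier M \<Longrightarrow>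
    madd M (madd M x y) z = madd M x (madd M y z)"
  using M unfolding lmodule_def by meson

lemma madd_comm: "x \<in> mcarrier M \<Longrightarrow> y \<in> mcarrier M \<Longrightarrow> madd M x y = madd M y x"
  using M unfolding lmodule_def by meson

lemma madd_zero_left [simp]: "x \<in> mcarrier M \<Longrightarrow> madd M (mzero M) x = x"
  using M unfolding lmodule_def by meson

lemma madd_neg: "x \<in> mcarrier M \<Longrightarrow> madd M x (msmult M (-1) x) = mzero M"
  using M unfolding lmodule_def by meson

lemma msmult_madd_distrib:
  "x \<in> mcarrier M \<Longrightarrow> y \<in> mcarrier M \<Longrightarrow>
    msmult M r (madd M x y) = madd M (msmult M r x) (msmult M r y)"
  using M unfolding lmodule_def by meson

lemma msmult_add_distrib:
  "x \<in> mcarrier M \<Longrightarrow> msmult M (r + s) x = madd M (msmult M r x) (msmult M s x)"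
  using M unfolding lmodule_def by meson

lemma msmult_mult: "x \<in> mcarrier M \<Longrightarrow> msmult M (r * s) x = msmult M r (msmult M s x)"
  using M unfolding lmodule_def by meson

lemma msmult_one [simp]: "x \<in> mcarrier M \<Longrightarrow> msmult M 1 x = x"
  using M unfolding lmodule_def by meson

lemma madd_zero_right [simp]: "x \<in> mcarrier M \<Longrightarrow> madd M x (mzero M) = x"
  using madd_comm[of x "mzero M"] by simp

lemma madd_neg_left: "x \<in> mcarrier M \<Longrightarrow> madd M (msmult M (-1) x) x = mzero M"
  using madd_comm madd_neg by (metis msmult_closed)

lemma madd_left_cancel:
  assumes "x \<in> mcarrier M" "y \<in> mcarrier M" "z \<in> mcarrier M" "madd M x y = madd M x z"
  shows "y = z"
proof -
  have "y = madd M (madd M (msmult M (-1) x) x) y" using assms by (simp add: madd_neg_left)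
  also have "\<dots> = madd M (msmult M (-1) x) (madd M x z)" using assms by (simp add: madd_assoc)
  also have "\<dots> = z" using assms by (simp add: madd_assoc[symmetric] madd_neg_left)
  finally show ?thesis .
qed

lemma msmult_zero_left [simp]: "x \<in> mcarrier M \<Longrightarrow> msmult M 0 x = mzero M"
  using madd_left_cancel[of "msmult M 0 x" "msmult M 0 x" "mzero M"] msmult_add_distrib[of x 0 0]
  by simp

lemma msmult_zero_right [simp]: "msmult M r (mzero M) = mzero M"
  using msmult_mult[of "mzero M" r 0] by simp

lemma eq_if_diff_eq_zero:
  assumes "x \<in> mcarrier M" "y \<in> mcarrier M" "madd M x (msmult M (-1) y) = mzero M"
  shows "x = y"
proof -
  have "x = madd M x (madd M (msmult M (-1) y) y)" using assms by (simp add: madd_neg_left)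
  also have "\<dots> = y" using assms by (simp add: madd_assoc[symmetric])
  finally show ?thesis .
qed

lemma diff_madd_cancel:
  "x \<in> mcarrier M \<Longrightarrow> y \<in> mcarrier M \<Longrightarrow> madd M (madd M x (msmult M (-1) y)) y = x"
  by (simp add: madd_assoc madd_neg_left)

lemma madd_diff_cancel:
  "x \<in> mcarrier M \<Longrightarrow> y \<in> mcarrier M \<Longrightarrow> madd M (madd M x y) (msmult M (-1) y) = x"
  by (simp add: madd_assoc madd_neg)

lemma madd_swap_middle:
  assumes "a \<in> mcarrier M" "b \<in> mcarrier M" "c \<in> mcarrier M" "d \<in> mcarrier M"
  shows "madd M (madd M a b) (madd M c d) = madd M (madd M a c) (madd M b d)"
  using assms by (simp add: madd_assoc madd_comm[of b] flip: madd_assoc[of b c d])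

lemma submod_lmodule: "submod M N \<Longrightarrow> lmodule (sub M N)"
  using M unfolding submod_def lmodule_def by (auto simp: subset_iff)

lemma span_submod: "submod M (span M A)"
  unfolding span_def submod_def by auto

lemma span_superset: "A \<subseteq> mcarrier M \<Longrightarrow> A \<subseteq> span M A"
  unfolding span_def by auto

lemma carrier_submod: "submod M (mcarrier M)"
  unfolding submod_def by auto

lemma zero_submod: "submod M {mzero M}"
  unfolding submod_def by simp

end

lemma span_least: "submod M N \<Longrightarrow> A \<subseteq> N \<Longrightarrow> span M A \<subseteq> N"
  unfolding span_def by auto

lemma span_subset_carrier: "span M A \<subseteq> mcarrier M"
  unfolding span_def by auto

lemma submod_subset_carrier: "submod M N \<Longrightarrow> N \<subseteq> mcarrier M"
  unfolding submod_def by auto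

lemma submod_sub_iff: "submod M N \<Longrightarrow> submod (sub M N) L \<longleftrightarrow> submod M L \<and> L \<subseteq> N"
  unfolding submod_def by auto

lemma lhom_closed: "lhom M N f \<Longrightarrow> x \<in> mcarrier M \<Longrightarrow> f x \<in> mcarrier N"
  unfolding lhom_def by blast

lemma lhom_madd:
  "lhom M N f \<Longrightarrow> x \<in> mcarrier M \<Longrightarrow> y \<in> mcarrier M \<Longrightarrow> f (madd M x y) = madd N (f x) (f y)"
  unfolding lhom_def by blast

lemma lhom_msmult: "lhom M N f \<Longrightarrow> x \<in> mcarrier M \<Longrightarrow> f (msmult M r x) = msmult N r (f x)"
  unfolding lhom_def by blast

lemma lhom_zero:
  assumes "lmodule M" "lmodule N" "lhom M N f"
  shows "f (mzero M) = mzero N"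
  using lhom_msmult[OF assms(3) mzero_closed[OF assms(1)], of 0] assms
  by (simp add: lhom_closed)

lemma lhom_comp: "lhom M N f \<Longrightarrow> lhom N K g \<Longrightarrow> lhom M K (g \<circ> f)"
  unfolding lhom_def by auto

lemma lhom_restrict: "lhom M N f \<Longrightarrow> X \<subseteq> mcarrier M \<Longrightarrow> f ` X \<subseteq> Y \<Longrightarrow> lhom (sub M X) (sub N Y) f"
  unfolding lhom_def by (auto simp: subset_iff)

lemma lhom_restrict_cod: "lhom M N f \<Longrightarrow> f ` mcarrier M \<subseteq> Y \<Longrightarrow> lhom M (sub N Y) f"
  unfolding lhom_def by auto

lemma lhom_preimage_submod:
  assumes "lmodule M" "lmodule N" "lhom M N f" "submod N Y"
  shows "submod M {x \<in> mcarrier M. f x \<in> Y}"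
  using assms(4) lhom_zero[OF assms(1-3)] lhom_closed[OF assms(3)]
    lhom_madd[OF assms(3)] lhom_msmult[OF assms(3)]
  unfolding submod_def by (simp add: assms(1))

lemma ker_submod:
  assumes "lmodule M" "lmodule N" "lhom M N f"
  shows "submod M (ker M N f)"
  using lhom_preimage_submod[OF assms zero_submod[OF assms(2)]] by (simp add: ker_def)

lemma lhom_image_submod:
  assumes "lmodule M" "lmodule N" "lhom M N f" "submod M X"
  shows "submod N (f ` X)"
  unfolding submod_def
proof (intro conjI ballI allI)
  have X: "X \<subseteq> mcarrier M" using assms(4) by (rule submod_subset_carrier)
  then show "f ` X \<subseteq> mcarrier N" using lhom_closed[OF assms(3)] by blast
  have "mzero M \<in> X" using assms(4) unfolding submod_def by blast
  then show "mzero N \<in> f ` X" using lhom_zero[OF assms(1-3)] by (metis image_eqI)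
  fix a b r assume "a \<in> f ` X"
  then obtain x where x: "x \<in> X" "a = f x" by blast
  have xM: "x \<in> mcarrier M" using x(1) X by blast
  have "msmult M r x \<in> X" using x(1) assms(4) unfolding submod_def by blast
  moreover have "msmult N r a = f (msmult M r x)" using x(2) lhom_msmult[OF assms(3) xM] by simp
  ultimately show "msmult N r a \<in> f ` X" by simp
  assume "b \<in> f ` X"
  then obtain y where y: "y \<in> X" "b = f y" by blast
  have yM: "y \<in> mcarrier M" using y(1) X by blast
  have "madd M x y \<in> X" using x(1) y(1) assms(4) unfolding submod_def by blast
  moreover have "madd N a b = f (madd M x y)" using x(2) y(2) lhom_madd[OF assms(3) xM yM] by simp
  ultimately show "madd N a b \<in> f ` X" by simp
qed

lemma lhom_image_span:
  assumes "lmodule M" "lmodule N" "lhom M N f" "A \<subseteq> mcarrier M"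
  shows "f ` span M A \<subseteq> span N (f ` A)"
proof -
  have "f ` A \<subseteq> span N (f ` A)"
    using assms(4) lhom_closed[OF assms(3)] by (intro span_superset[OF assms(2)]) blast
  then have "A \<subseteq> {x \<in> mcarrier M. f x \<in> span N (f ` A)}"
    using assms(4) by blast
  then have "span M A \<subseteq> {x \<in> mcarrier M. f x \<in> span N (f ` A)}"
    by (rule span_least[OF lhom_preimage_submod[OF assms(1-3) span_submod[OF assms(2)]]])
  then show ?thesis by blast
qed

lemma fin_gen_surj_image:
  assumes "lmodule M" "lmodule N" "lhom M N f" "f ` mcarrier M = mcarrier N" "fin_gen M"
  shows "fin_gen N"
proof -
  obtain A where A: "finite A" "A \<subseteq> mcarrier M" "span M A = mcarrier M"
    using assms(5) unfolding fin_gen_def by auto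
  have "mcarrier N \<subseteq> span N (f ` A)"
    using lhom_image_span[OF assms(1-3) A(2)] by (simp add: A(3) assms(4))
  then have "span N (f ` A) = mcarrier N" using span_subset_carrier by (rule antisym[rotated])
  moreover have "f ` A \<subseteq> mcarrier N" using A(2) assms(4) by blast
  ultimately show ?thesis unfolding fin_gen_def using A(1) by blast
qed

lemma lhom_factor_through_surj:
  assumes P: "lmodule P" and T: "lmodule T" and S: "lmodule S"
    and f: "lhom P T f" and surj: "f ` mcarrier P = mcarrier T"
    and q: "lhom P S q" and ker: "ker P T f \<subseteq> ker P S q"
  obtains q' where "lhom T S q'" "\<And>p. p \<in> mcarrier P \<Longrightarrow> q' (f p) = q p"
proof -
  have well_defined: "q p1 = q p2" if p: "p1 \<in> mcarrier P" "p2 \<in> mcarrier P" "f p1 = f p2" for p1 p2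
  proof -
    define d where "d = madd P p1 (msmult P (-1) p2)"
    have "f d = madd T (f p2) (msmult T (-1) (f p2))"
      unfolding d_def using lhom_madd[OF f] lhom_msmult[OF f] P p by simp
    then have "d \<in> ker P T f" unfolding ker_def d_def using madd_neg[OF T lhom_closed[OF f p(2)]] P p by simp
    then have "q d = mzero S" using ker unfolding ker_def by blast
    then have "madd S (q p1) (msmult S (-1) (q p2)) = mzero S"
      unfolding d_def using lhom_madd[OF q] lhom_msmult[OF q] P p by simp
    then show ?thesis using eq_if_diff_eq_zero[OF S lhom_closed[OF q p(1)] lhom_closed[OF q p(2)]] by simp
  qed
  define q' where "q' t = q (SOME p. p \<in> mcarrier P \<and> f p = t)" for t
  have q'_f: "q' (f p) = q p" if p: "p \<in> mcarrier P" for p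
  proof -
    have "\<exists>p'. p' \<in> mcarrier P \<and> f p' = f p" using p by blast
    then have "(SOME p'. p' \<in> mcarrier P \<and> f p' = f p) \<in> mcarrier P \<and> f (SOME p'. p' \<in> mcarrier P \<and> f p' = f p) = f p"
      by (rule someI_ex)
    then show ?thesis unfolding q'_def using well_defined p by blast
  qed
  have "lhom T S q'"
    unfolding lhom_def
  proof (intro conjI ballI allI)
    fix t assume "t \<in> mcarrier T"
    then obtain p where p: "p \<in> mcarrier P" "t = f p" using surj by blast
    then show "q' t \<in> mcarrier S" using q'_f lhom_closed[OF q] by simp
    fix r show "q' (msmult T r t) = msmult S r (q' t)"
      using p q'_f lhom_msmult[OF f p(1)] lhom_msmult[OF q p(1)] P by (metis msmult_closed)
    fix t' assume "t' \<in> mcarrier T"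
    then obtain p' where p': "p' \<in> mcarrier P" "t' = f p'" using surj by blast
    show "q' (madd T t t') = madd S (q' t) (q' t')"
      using p p' q'_f lhom_madd[OF f p(1) p'(1)] lhom_madd[OF q p(1) p'(1)] P by (metis madd_closed)
  qed
  then show ?thesis using that q'_f by blast
qed

section \<open>Maximal submodules and the radical\<close>

definition add_cyclic :: "('r::ring_1, 'm) lmod \<Rightarrow> 'm set \<Rightarrow> 'm \<Rightarrow> 'm set" where
  "add_cyclic M L z = {madd M l (msmult M c z) | l c. l \<in> L}"

context
  fixes M :: "('r::ring_1, 'm) lmod" and L :: "'m set" and z :: 'm
  assumes M: "lmodule M" and L: "submod M L" and z: "z \<in> mcarrier M"
begin

lemma submod_add_cyclic: "submod M (add_cyclic M L z)"
  unfolding submod_def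
proof (intro conjI ballI allI)
  have LM: "L \<subseteq> mcarrier M" using L by (rule submod_subset_carrier)
  then show "add_cyclic M L z \<subseteq> mcarrier M" using M z unfolding add_cyclic_def by auto
  have "mzero M = madd M (mzero M) (msmult M 0 z)" "mzero M \<in> L"
    using M z L unfolding submod_def by simp_all
  then show "mzero M \<in> add_cyclic M L z" unfolding add_cyclic_def by blast
next
  fix x y assume "x \<in> add_cyclic M L z" "y \<in> add_cyclic M L z"
  then obtain l1 c1 l2 c2 where xy: "x = madd M l1 (msmult M c1 z)" "l1 \<in> L"
      "y = madd M l2 (msmult M c2 z)" "l2 \<in> L"
    unfolding add_cyclic_def by blast
  have l: "l1 \<in> mcarrier M" "l2 \<in> mcarrier M" using xy L submod_subset_carrier by blast+
  have "madd M x y = madd M (madd M l1 l2) (msmult M (c1 + c2) z)"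
    using madd_swap_middle[OF M l(1) _ l(2)] msmult_add_distrib[OF M z] M z by (simp add: xy)
  moreover have "madd M l1 l2 \<in> L" using xy L unfolding submod_def by blast
  ultimately show "madd M x y \<in> add_cyclic M L z" unfolding add_cyclic_def by blast
next
  fix r x assume "x \<in> add_cyclic M L z"
  then obtain l c where x: "x = madd M l (msmult M c z)" "l \<in> L"
    unfolding add_cyclic_def by blast
  have l: "l \<in> mcarrier M" using x L submod_subset_carrier by blast
  have "msmult M r x = madd M (msmult M r l) (msmult M (r * c) z)"
    using msmult_madd_distrib[OF M l] msmult_mult[OF M z] M z by (simp add: x)
  moreover have "msmult M r l \<in> L" using x L unfolding submod_def by blast
  ultimately show "msmult M r x \<in> add_cyclic M L z" unfolding add_cyclic_def by blast
qed

lemma subset_add_cyclic: "L \<subseteq> add_cyclic M L z"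
proof
  fix l assume l: "l \<in> L"
  then have "l = madd M l (msmult M 0 z)" using M z L submod_subset_carrier by fastforce
  then show "l \<in> add_cyclic M L z" using l unfolding add_cyclic_def by blast
qed

lemma mem_add_cyclic: "z \<in> add_cyclic M L z"
proof -
  have "z = madd M (mzero M) (msmult M 1 z)" "mzero M \<in> L"
    using M z L unfolding submod_def by simp_all
  then show ?thesis unfolding add_cyclic_def by blast
qed

lemma add_cyclic_least: "submod M L' \<Longrightarrow> L \<subseteq> L' \<Longrightarrow> z \<in> L' \<Longrightarrow> add_cyclic M L z \<subseteq> L'"
  unfolding add_cyclic_def submod_def by blast

lemma maxsub_add_cyclic: "maxsub M L \<Longrightarrow> z \<notin> L \<Longrightarrow> add_cyclic M L z = mcarrier M"
  using submod_add_cyclic subset_add_cyclic mem_add_cyclic unfolding maxsub_def by blast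

end

lemma maxsub_preimage:
  assumes A: "lmodule A" and B: "lmodule B" and g: "lhom A B g" and max: "maxsub B L'"
  shows "{x \<in> mcarrier A. g x \<in> L'} = mcarrier A \<or> maxsub A {x \<in> mcarrier A. g x \<in> L'}"
proof -
  define L where "L = {x \<in> mcarrier A. g x \<in> L'}"
  have L': "submod B L'" using max unfolding maxsub_def by blast
  have L: "submod A L" unfolding L_def by (rule lhom_preimage_submod[OF A B g L'])
  have "add_cyclic A L z = mcarrier A" if z: "z \<in> mcarrier A" "z \<notin> L" for z
  proof
    show "add_cyclic A L z \<subseteq> mcarrier A"
      using submod_add_cyclic[OF A L z(1)] by (rule submod_subset_carrier)
    show "mcarrier A \<subseteq> add_cyclic A L z"
    proof
      fix n assume n: "n \<in> mcarrier A"
      have gz: "g z \<in> mcarrier B" "g z \<notin> L'" using z lhom_closed[OF g] unfolding L_def by auto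
      have "g n \<in> add_cyclic B L' (g z)"
        using maxsub_add_cyclic[OF B L' gz(1) max gz(2)] lhom_closed[OF g n] by simp
      then obtain l c where lc: "g n = madd B l (msmult B c (g z))" "l \<in> L'"
        unfolding add_cyclic_def by blast
      have l: "l \<in> mcarrier B" using lc(2) L' submod_subset_carrier by blast
      define w where "w = madd A n (msmult A (-1) (msmult A c z))"
      have w: "w \<in> mcarrier A" unfolding w_def using A n z by simp
      have "g w = madd B (g n) (msmult B (-1) (msmult B c (g z)))"
        unfolding w_def using lhom_madd[OF g] lhom_msmult[OF g] A n z by simp
      also have "\<dots> = l" using madd_diff_cancel[OF B l] B gz(1) by (simp add: lc(1))
      finally have "w \<in> L" unfolding L_def using w lc(2) by simp
      moreover have "n = madd A w (msmult A c z)"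
        unfolding w_def using diff_madd_cancel[OF A n] A z by simp
      ultimately show "n \<in> add_cyclic A L z" unfolding add_cyclic_def by blast
    qed
  qed
  moreover have "L2 = L \<or> L2 = mcarrier A" if L2: "submod A L2" "L \<subseteq> L2" for L2
  proof (cases "L2 \<subseteq> L")
    case False
    then obtain z where z: "z \<in> L2" "z \<notin> L" by blast
    have "z \<in> mcarrier A" using z(1) L2(1) submod_subset_carrier by blast
    then have "mcarrier A \<subseteq> L2"
      using add_cyclic_least[OF A L _ L2 z(1)] calculation z(2) by blast
    then show ?thesis using L2(1) submod_subset_carrier by blast
  qed (use L2 in blast)
  ultimately show ?thesis using L unfolding L_def maxsub_def by blast
qed

lemma rad_subset_carrier: "rad M \<subseteq> mcarrier M"
  unfolding rad_def by auto

lemma rad_submod: "lmodule M \<Longrightarrow> submod M (rad M)"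
  unfolding rad_def submod_def maxsub_def by auto

lemma rad_subset_maxsub: "maxsub M L \<Longrightarrow> rad M \<subseteq> L"
  unfolding rad_def by auto

lemma lhom_image_rad:
  assumes A: "lmodule A" and B: "lmodule B" and g: "lhom A B g"
  shows "g ` rad A \<subseteq> rad B"
proof
  fix y assume "y \<in> g ` rad A"
  then obtain x where x: "x \<in> rad A" "y = g x" by blast
  have xA: "x \<in> mcarrier A" using x(1) rad_subset_carrier[of A] by blast
  have "g x \<in> L'" if max: "maxsub B L'" for L'
    using maxsub_preimage[OF A B g max] rad_subset_maxsub[of A] x(1) xA by blast
  then show "y \<in> rad B" unfolding rad_def using x(2) lhom_closed[OF g xA] by blast
qed

lemma submod_Union_chain:
  assumes ne: "C \<noteq> {}" and sub: "\<And>X. X \<in> C \<Longrightarrow> submod M X"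
    and chain: "\<And>X Y. X \<in> C \<Longrightarrow> Y \<in> C \<Longrightarrow> X \<subseteq> Y \<or> Y \<subseteq> X"
  shows "submod M (\<Union>C)"
  unfolding submod_def
proof (intro conjI ballI allI)
  have "X \<subseteq> mcarrier M" if "X \<in> C" for X using sub[OF that] by (rule submod_subset_carrier)
  then show "\<Union>C \<subseteq> mcarrier M" by blast
  obtain X where X: "X \<in> C" using ne by blast
  then show "mzero M \<in> \<Union>C" using sub[OF X] unfolding submod_def by blast
  fix x y r assume "x \<in> \<Union>C"
  then obtain X where X: "X \<in> C" "x \<in> X" by blast
  then show "msmult M r x \<in> \<Union>C" using sub[OF X(1)] unfolding submod_def by blast
  assume "y \<in> \<Union>C"
  then obtain Y where Y: "Y \<in> C" "y \<in> Y" by blast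
  have "x \<in> X \<union> Y" "y \<in> X \<union> Y" "X \<union> Y \<in> C"
    using X Y chain[OF X(1) Y(1)] by (auto simp: sup_absorb1 sup_absorb2)
  then show "madd M x y \<in> \<Union>C" using sub[of "X \<union> Y"] unfolding submod_def by blast
qed

definition maximal_avoiding :: "('r::ring_1, 'm) lmod \<Rightarrow> 'm set \<Rightarrow> 'm \<Rightarrow> 'm set \<Rightarrow> bool" where
  "maximal_avoiding M N x L \<longleftrightarrow> submod M L \<and> L \<subseteq> N \<and> x \<notin> L \<and>
     (\<forall>L'. submod M L' \<and> L \<subseteq> L' \<and> L' \<subseteq> N \<and> x \<notin> L' \<longrightarrow> L' = L)"

lemma maximal_avoiding_exists:
  assumes "submod M B" "B \<subseteq> N" "x \<notin> B"
  shows "\<exists>L. B \<subseteq> L \<and> maximal_avoiding M N x L"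
proof -
  define \<A> where "\<A> = {L. submod M L \<and> B \<subseteq> L \<and> L \<subseteq> N \<and> x \<notin> L}"
  have "\<exists>L\<in>\<A>. \<forall>L'\<in>\<A>. L \<subseteq> L' \<longrightarrow> L' = L"
  proof (rule subset_Zorn_nonempty)
    show "\<A> \<noteq> {}" using assms unfolding \<A>_def by blast
    fix C assume C: "C \<noteq> {}" "subset.chain \<A> C"
    then have "submod M (\<Union>C)"
      by (intro submod_Union_chain) (auto simp: \<A>_def subset_chain_def)
    then show "\<Union>C \<in> \<A>" using C unfolding \<A>_def subset_chain_def by blast
  qed
  then obtain L where L: "L \<in> \<A>" "\<forall>L'\<in>\<A>. L \<subseteq> L' \<longrightarrow> L' = L" by blast
  have "maximal_avoiding M N x L"
    unfolding maximal_avoiding_def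
  proof (intro conjI allI impI)
    show "submod M L" "L \<subseteq> N" "x \<notin> L" using L(1) unfolding \<A>_def by blast+
    fix L' assume "submod M L' \<and> L \<subseteq> L' \<and> L' \<subseteq> N \<and> x \<notin> L'"
    then show "L' = L" using L unfolding \<A>_def by blast
  qed
  then show ?thesis using L(1) unfolding \<A>_def by blast
qed

lemma mem_add_cyclic_if_maximal_avoiding:
  assumes M: "lmodule M" and N: "submod M N" and L: "maximal_avoiding M N x L"
    and u: "u \<in> N" "u \<notin> L"
  shows "x \<in> add_cyclic M L u"
proof (rule ccontr)
  have sL: "submod M L" and LN: "L \<subseteq> N" using L unfolding maximal_avoiding_def by blast+
  have uM: "u \<in> mcarrier M" using u(1) N submod_subset_carrier by blast
  assume "x \<notin> add_cyclic M L u"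
  moreover have "add_cyclic M L u \<subseteq> N" by (rule add_cyclic_least[OF M sL uM N LN u(1)])
  ultimately have "add_cyclic M L u = L"
    using L submod_add_cyclic[OF M sL uM] subset_add_cyclic[OF M sL uM]
    unfolding maximal_avoiding_def by blast
  then show False using mem_add_cyclic[OF M sL uM] u(2) by simp
qed

lemma maxsub_if_maximal_avoiding:
  assumes M: "lmodule M" and N: "submod M N" and L: "maximal_avoiding M N x L"
    and x: "x \<in> N" and N_eq: "N \<subseteq> add_cyclic M L x"
  shows "maxsub (sub M N) L"
  unfolding maxsub_def sub_simps submod_sub_iff[OF N]
proof (intro conjI allI impI)
  show sL: "submod M L" and LN: "L \<subseteq> N" using L unfolding maximal_avoiding_def by blast+
  show "L \<noteq> N" using L x unfolding maximal_avoiding_def by blast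
  have NM: "N \<subseteq> mcarrier M" using N by (rule submod_subset_carrier)
  fix L' assume "(submod M L' \<and> L' \<subseteq> N) \<and> L \<subseteq> L'"
  then have L': "submod M L'" "L' \<subseteq> N" "L \<subseteq> L'" by blast+
  have closed: "add_cyclic M L z \<subseteq> L'" if "z \<in> L'" for z
    using add_cyclic_least[OF M sL _ L'(1) L'(3) that] that L'(2) NM by blast
  show "L' = L \<or> L' = N"
  proof (cases "L' \<subseteq> L")
    case False
    then obtain z where z: "z \<in> L'" "z \<notin> L" by blast
    have "x \<in> L'"
      using mem_add_cyclic_if_maximal_avoiding[OF M N L _ z(2)] closed[OF z(1)] z(1) L'(2) by blast
    then show ?thesis using closed N_eq L'(2) by blast
  qed (use L'(3) in blast)
qed

lemma maxsub_zero_simple: "simple_mod S \<Longrightarrow> maxsub S {mzero S}"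
  using zero_submod[of S] mzero_closed[of S] unfolding simple_mod_def maxsub_def by blast

lemma superfluous_subset_rad:
  assumes P: "lmodule P" and sup: "superfluous P K"
  shows "K \<subseteq> rad P"
proof -
  have K: "submod P K" using sup unfolding superfluous_def by blast
  have "K \<subseteq> L" if max: "maxsub P L" for L
  proof (rule ccontr)
    assume "\<not> K \<subseteq> L"
    then obtain k where k: "k \<in> K" "k \<notin> L" by blast
    have L: "submod P L" using max unfolding maxsub_def by blast
    have KL: "K \<union> L \<subseteq> mcarrier P" using K L submod_subset_carrier by blast
    have "L \<subseteq> span P (K \<union> L)" "k \<in> span P (K \<union> L)" using span_superset[OF P KL] k by blast+
    then have "span P (K \<union> L) = mcarrier P"
      using max span_submod[OF P] k(2) unfolding maxsub_def by blast
    then show False using sup L max unfolding superfluous_def maxsub_def by blast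
  qed
  then show ?thesis unfolding rad_def using K submod_subset_carrier by blast
qed

section \<open>The torsion radical t_S and its Loewy length\<close>

abbreviation T_images :: "('r::ring_1) umod set \<Rightarrow> ('r, 'm) lmod \<Rightarrow> 'm set" where
  "T_images \<S> N \<equiv> \<Union> {f ` mcarrier T | (T :: 'r umod) f.
      lmodule T \<and> fin_gen T \<and> in_T \<S> T \<and> lhom T N f}"

lemma T_images_subset_carrier:
  fixes \<S> :: "('r::ring_1) umod set"
  shows "T_images \<S> N \<subseteq> mcarrier N"
proof
  fix y assume "y \<in> T_images \<S> N"
  then obtain T :: "'r umod" and f x where "lhom T N f" "x \<in> mcarrier T" "y = f x" by blast
  then show "y \<in> mcarrier N" using lhom_closed by metis
qed

lemma tS_submod: "lmodule N \<Longrightarrow> submod N (tS \<S> N)"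
  unfolding tS_def by (rule span_submod)

lemma tS_subset_carrier: "tS \<S> N \<subseteq> mcarrier N"
  unfolding tS_def by (rule span_subset_carrier)

lemma T_images_subset_tS: "lmodule N \<Longrightarrow> T_images \<S> N \<subseteq> tS \<S> N"
  unfolding tS_def by (rule span_superset[OF _ T_images_subset_carrier])

lemma lhom_image_T_images:
  fixes \<S> :: "('r::ring_1) umod set"
  assumes h: "lhom N N' h"
  shows "h ` T_images \<S> N \<subseteq> T_images \<S> N'"
proof
  fix y assume "y \<in> h ` T_images \<S> N"
  then obtain T f x where T: "lmodule (T :: 'r umod)" "fin_gen T" "in_T \<S> T" "lhom T N f"
    and x: "x \<in> mcarrier T" "y = (h \<circ> f) x"
    by auto
  have "lhom T N' (h \<circ> f)" using lhom_comp[OF T(4) h] .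
  then show "y \<in> T_images \<S> N'" using T(1-3) x by blast
qed

lemma lhom_image_tS:
  assumes N: "lmodule N" and N': "lmodule N'" and h: "lhom N N' h"
  shows "h ` tS \<S> N \<subseteq> tS \<S> N'"
proof -
  have "h ` tS \<S> N \<subseteq> span N' (h ` T_images \<S> N)"
    unfolding tS_def by (rule lhom_image_span[OF N N' h T_images_subset_carrier])
  also have "\<dots> \<subseteq> tS \<S> N'"
    using lhom_image_T_images[OF h] T_images_subset_tS[OF N']
    by (intro span_least[OF tS_submod[OF N']]) blast
  finally show ?thesis .
qed

lemma rad_tS_submod:
  assumes N: "lmodule N" and X: "submod N X"
  shows "submod N (rad_tS \<S> N X)"
proof -
  have t: "submod N (tS \<S> (sub N X))"
    using tS_submod[OF submod_lmodule[OF N X]] submod_sub_iff[OF X] by blast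
  show ?thesis
    using rad_submod[OF submod_lmodule[OF N t]] submod_sub_iff[OF t]
    unfolding rad_tS_def by blast
qed

lemma rad_tS_subset_tS: "rad_tS \<S> N X \<subseteq> tS \<S> (sub N X)"
  unfolding rad_tS_def using rad_subset_carrier by (metis sub_simps(1))

lemma tS_sub_subset: "tS \<S> (sub N X) \<subseteq> X"
  using tS_subset_carrier by (metis sub_simps(1))

lemma lhom_image_rad_tS:
  assumes N: "lmodule N" and N': "lmodule N'" and h: "lhom N N' h"
    and X: "submod N X" and X': "submod N' X'" and hX: "h ` X \<subseteq> X'"
  shows "h ` rad_tS \<S> N X \<subseteq> rad_tS \<S> N' X'"
proof -
  have L: "lmodule (sub N X)" "lmodule (sub N' X')"
    using submod_lmodule N N' X X' by blast+
  have "lhom (sub N X) (sub N' X') h"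
    using lhom_restrict[OF h submod_subset_carrier[OF X] hX] .
  then have ht: "h ` tS \<S> (sub N X) \<subseteq> tS \<S> (sub N' X')"
    by (rule lhom_image_tS[OF L])
  have t: "submod N (tS \<S> (sub N X))" "submod N' (tS \<S> (sub N' X'))"
    using tS_submod[OF L(1)] tS_submod[OF L(2)] submod_sub_iff X X' by blast+
  have "lhom (sub N (tS \<S> (sub N X))) (sub N' (tS \<S> (sub N' X'))) h"
    using lhom_restrict[OF h submod_subset_carrier[OF t(1)] ht] .
  then show ?thesis
    unfolding rad_tS_def
    by (rule lhom_image_rad[OF submod_lmodule[OF N t(1)] submod_lmodule[OF N' t(2)]])
qed

lemma submod_rad_tS_iter: "lmodule N \<Longrightarrow> submod N ((rad_tS \<S> N ^^ i) (mcarrier N))"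
  by (induction i) (simp_all add: carrier_submod rad_tS_submod)

lemma lhom_image_rad_tS_iter:
  assumes N: "lmodule N" and N': "lmodule N'" and h: "lhom N N' h"
  shows "h ` (rad_tS \<S> N ^^ i) (mcarrier N) \<subseteq> (rad_tS \<S> N' ^^ i) (mcarrier N')"
proof (induction i)
  case 0
  then show ?case using lhom_closed[OF h] by auto
next
  case (Suc i)
  then show ?case
    using lhom_image_rad_tS[OF N N' h submod_rad_tS_iter[OF N] submod_rad_tS_iter[OF N']] by simp
qed

definition tS_vanishes_at :: "('r::ring_1) umod set \<Rightarrow> ('r, 'm) lmod \<Rightarrow> nat \<Rightarrow> bool" where
  "tS_vanishes_at \<S> N i \<longleftrightarrow> tS \<S> (sub N ((rad_tS \<S> N ^^ i) (mcarrier N))) = {mzero N}"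

lemma llt_le: "tS_vanishes_at \<S> N i \<Longrightarrow> llt \<S> N \<le> i"
  unfolding llt_def tS_vanishes_at_def by (rule Least_le)

lemma tS_vanishes_at_llt: "tS_vanishes_at \<S> N i \<Longrightarrow> tS_vanishes_at \<S> N (llt \<S> N)"
  unfolding llt_def tS_vanishes_at_def by (rule LeastI)

definition cogenerated_by :: "('r::ring_1, 'm) lmod \<Rightarrow> ('r, 'n) lmod \<Rightarrow> bool" where
  "cogenerated_by N N' \<longleftrightarrow>
     (\<forall>x\<in>mcarrier N. x \<noteq> mzero N \<longrightarrow> (\<exists>h. lhom N N' h \<and> h x \<noteq> mzero N'))"

lemma tS_vanishes_at_cogenerated:
  assumes N: "lmodule N" and N': "lmodule N'" and cogen: "cogenerated_by N N'"
    and vanish: "tS_vanishes_at \<S> N' i"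
  shows "tS_vanishes_at \<S> N i"
proof -
  define X where "X = (rad_tS \<S> N ^^ i) (mcarrier N)"
  define X' where "X' = (rad_tS \<S> N' ^^ i) (mcarrier N')"
  have X: "submod N X" and X': "submod N' X'"
    unfolding X_def X'_def by (rule submod_rad_tS_iter[OF N], rule submod_rad_tS_iter[OF N'])
  have L: "lmodule (sub N X)" "lmodule (sub N' X')"
    by (rule submod_lmodule[OF N X], rule submod_lmodule[OF N' X'])
  have "z = mzero N" if z: "z \<in> tS \<S> (sub N X)" for z
  proof (rule ccontr)
    assume "z \<noteq> mzero N"
    moreover have zN: "z \<in> mcarrier N"
      using z tS_sub_subset[of \<S> N X] submod_subset_carrier[OF X] by blast
    ultimately obtain h where h: "lhom N N' h" "h z \<noteq> mzero N'"
      using cogen unfolding cogenerated_by_def by blast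
    have "h ` X \<subseteq> X'"
      unfolding X_def X'_def by (rule lhom_image_rad_tS_iter[OF N N' h(1)])
    then have "lhom (sub N X) (sub N' X') h"
      by (rule lhom_restrict[OF h(1) submod_subset_carrier[OF X]])
    then have "h z \<in> tS \<S> (sub N' X')" using lhom_image_tS[OF L] z by blast
    then show False using vanish h(2) unfolding tS_vanishes_at_def X'_def by simp
  qed
  moreover have "mzero N \<in> tS \<S> (sub N X)"
    using tS_submod[OF L(1)] unfolding submod_def by simp
  ultimately show ?thesis unfolding tS_vanishes_at_def X_def by blast
qed

lemma cogenerated_by_sub_mono: "A \<subseteq> B \<Longrightarrow> cogenerated_by (sub P A) (sub P B)"
  unfolding cogenerated_by_def lhom_def by (intro ballI impI exI[of _ id]) auto

lemma tS_vanishes_at_Suc_rad: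
  assumes P: "lmodule P" and t: "tS \<S> P = mcarrier P" and vanish: "tS_vanishes_at \<S> P (Suc j)"
  shows "tS_vanishes_at \<S> (sub P (rad P)) j"
proof -
  have "rad_tS \<S> (sub P (rad P)) = rad_tS \<S> P" unfolding rad_tS_def by (simp add: fun_eq_iff)
  moreover have "(rad_tS \<S> P ^^ Suc j) (mcarrier P) = (rad_tS \<S> P ^^ j) (rad P)"
    using t unfolding rad_tS_def by (simp add: funpow_Suc_right del: funpow.simps)
  ultimately show ?thesis using vanish unfolding tS_vanishes_at_def by simp
qed

lemma simple_mod_in_X:
  assumes simple: "simple_mod (S :: 'r::ring_1 umod)" and S: "S \<in> \<S>"
  shows "in_X \<S> S"
proof -
  have LS: "lmodule S" using simple unfolding simple_mod_def by blast
  obtain s where s: "s \<in> mcarrier S" "s \<noteq> mzero S"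
    using simple mzero_closed[OF LS] unfolding simple_mod_def by blast
  have "s \<in> span S {s}" using span_superset[OF LS, of "{s}"] s(1) by blast
  then have "span S {s} = mcarrier S"
    using simple span_submod[OF LS, of "{s}"] s(2) unfolding simple_mod_def by blast
  then have fg: "fin_gen S" unfolding fin_gen_def using s(1) by (intro exI[of _ "{s}"]) simp
  define Xs where "Xs i = (if i = 0 then {mzero S} else mcarrier S)" for i :: nat
  have "filt_in \<S> S"
    unfolding filt_in_def
  proof (intro exI[of _ "1::nat"] exI[of _ Xs] conjI allI impI)
    show "Xs 0 = {mzero S}" "Xs 1 = mcarrier S" unfolding Xs_def by simp_all
    show "submod S (Xs i)" if "i \<le> 1" for i
      unfolding Xs_def using zero_submod[OF LS] carrier_submod[OF LS] by simp
    fix i :: nat assume "i < 1"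
    then have i: "i = 0" by simp
    show "Xs i \<subseteq> Xs (Suc i)" unfolding Xs_def i using mzero_closed[OF LS] by simp
    have "lhom (sub S (Xs (Suc i))) S id" "id ` Xs (Suc i) = mcarrier S"
      "ker (sub S (Xs (Suc i))) S id = Xs i"
      unfolding Xs_def i lhom_def ker_def using mzero_closed[OF LS] by auto
    then show "\<exists>S'\<in>\<S>. \<exists>f. lhom (sub S (Xs (Suc i))) S' f \<and> f ` Xs (Suc i) = mcarrier S' \<and>
        ker (sub S (Xs (Suc i))) S' f = Xs i"
      using S by blast
  qed
  then show ?thesis unfolding in_X_def using LS fg by blast
qed

lemma lhom_tS_to_X_zero:
  fixes \<S> :: "('r::ring_1) umod set" and X :: "'r umod"
  assumes M: "lmodule M" and X: "in_X \<S> X" and h: "lhom (sub M (tS \<S> M)) X h"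
  shows "\<forall>y\<in>tS \<S> M. h y = mzero X"
proof -
  have LX: "lmodule X" using X unfolding in_X_def by blast
  have t: "submod M (tS \<S> M)" by (rule tS_submod[OF M])
  have LT: "lmodule (sub M (tS \<S> M))" by (rule submod_lmodule[OF M t])
  have K: "submod M (ker (sub M (tS \<S> M)) X h)"
    using ker_submod[OF LT LX h] submod_sub_iff[OF t] by blast
  have "T_images \<S> M \<subseteq> ker (sub M (tS \<S> M)) X h"
  proof
    fix y assume "y \<in> T_images \<S> M"
    then obtain T :: "'r umod" and u t where T: "in_T \<S> T" "lhom T M u" "t \<in> mcarrier T" "y = u t"
      and uT: "u ` mcarrier T \<subseteq> T_images \<S> M"
      by blast
    have "u ` mcarrier T \<subseteq> tS \<S> M" using uT T_images_subset_tS[OF M] by blast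
    then have "lhom T X (h \<circ> u)" by (rule lhom_comp[OF lhom_restrict_cod[OF T(2)] h])
    then have "h (u t) = mzero X" using T(1,3) X unfolding in_T_def by auto
    moreover have "u t \<in> tS \<S> M" using \<open>u ` mcarrier T \<subseteq> tS \<S> M\<close> T(3) by blast
    ultimately show "y \<in> ker (sub M (tS \<S> M)) X h" unfolding ker_def using T(4) by simp
  qed
  then have "tS \<S> M \<subseteq> ker (sub M (tS \<S> M)) X h"
    using span_least[OF K] by (simp add: tS_def)
  then show ?thesis unfolding ker_def by blast
qed

lemma filt_in_lhom_zero:
  fixes \<S> :: "('r::ring_1) umod set"
  assumes zero: "\<And>(S :: 'r umod) q. S \<in> \<S> \<Longrightarrow> lhom P S q \<Longrightarrow> \<forall>p\<in>mcarrier P. q p = mzero S"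
    and X: "filt_in \<S> X" and g: "lhom P X g"
  shows "\<forall>x\<in>mcarrier P. g x = mzero X"
proof -
  obtain n Xs where Xs: "Xs 0 = {mzero X}" "Xs n = mcarrier X" "\<forall>i\<le>n. submod X (Xs i)"
    and factors: "\<forall>i<n. Xs i \<subseteq> Xs (Suc i) \<and> (\<exists>S\<in>\<S>. \<exists>\<phi>. lhom (sub X (Xs (Suc i))) S \<phi> \<and>
        \<phi> ` Xs (Suc i) = mcarrier S \<and> ker (sub X (Xs (Suc i))) S \<phi> = Xs i)"
    using X unfolding filt_in_def by (elim exE conjE) (rule that)
  have "g ` mcarrier P \<subseteq> Xs i" if "i \<le> n" for i
    using that
  proof (induction i rule: inc_induct)
    case base
    then show ?case using lhom_closed[OF g] Xs(2) by blast
  next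
    case (step i)
    obtain S \<phi> where S: "S \<in> \<S>" "lhom (sub X (Xs (Suc i))) S \<phi>"
        "ker (sub X (Xs (Suc i))) S \<phi> = Xs i"
      using factors step.hyps(2) by blast
    have "lhom P S (\<phi> \<circ> g)" by (rule lhom_comp[OF lhom_restrict_cod[OF g step.IH] S(2)])
    then have \<phi>g: "\<forall>p\<in>mcarrier P. \<phi> (g p) = mzero S" using zero[OF S(1)] by simp
    show ?case
    proof
      fix y assume "y \<in> g ` mcarrier P"
      then obtain p where p: "p \<in> mcarrier P" "y = g p" by blast
      have "y \<in> ker (sub X (Xs (Suc i))) S \<phi>"
        unfolding ker_def using step.IH \<phi>g p by auto
      then show "y \<in> Xs i" using S(3) by simp
    qed
  qed
  then show ?thesis using Xs(1) by blast
qed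

section \<open>Left artinian rings\<close>

lemma regmod_simps [simp]:
  "mcarrier regmod = UNIV" "madd regmod = (+)" "mzero regmod = 0" "msmult regmod = (*)"
  by (simp_all add: regmod_def)

lemma lmodule_regmod: "lmodule (regmod :: ('r::ring_1, 'r) lmod)"
  unfolding lmodule_def by (simp add: algebra_simps)

lemma lhom_mult_right: "lhom (regmod :: ('r::ring_1, 'r) lmod) regmod (\<lambda>x. x * a)"
  unfolding lhom_def by (simp add: algebra_simps)

definition left_ideal :: "'r::ring_1 set \<Rightarrow> bool" where
  "left_ideal I \<longleftrightarrow> submod (regmod :: ('r, 'r) lmod) I"

lemma left_ideal_iff:
  "left_ideal I \<longleftrightarrow> 0 \<in> I \<and> (\<forall>x\<in>I. \<forall>y\<in>I. x + y \<in> I) \<and> (\<forall>r. \<forall>x\<in>I. r * x \<in> I)"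
  unfolding left_ideal_def submod_def by simp

lemma left_ideal_zero: "left_ideal I \<Longrightarrow> 0 \<in> I"
  unfolding left_ideal_iff by blast

lemma left_ideal_add: "left_ideal I \<Longrightarrow> x \<in> I \<Longrightarrow> y \<in> I \<Longrightarrow> x + y \<in> I"
  unfolding left_ideal_iff by blast

lemma left_ideal_mult: "left_ideal I \<Longrightarrow> x \<in> I \<Longrightarrow> r * x \<in> I"
  unfolding left_ideal_iff by blast

lemma left_ideal_diff: "left_ideal I \<Longrightarrow> x \<in> I \<Longrightarrow> y \<in> I \<Longrightarrow> x - y \<in> I"
  using left_ideal_add[of I x "-1 * y"] left_ideal_mult[of I y "-1"] by simp

lemma left_ideal_eq_UNIV: "left_ideal I \<Longrightarrow> 1 \<in> I \<Longrightarrow> I = UNIV"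
  using left_ideal_mult[of I 1] by force

lemma left_ideal_Inter: "(\<And>I. I \<in> \<I> \<Longrightarrow> left_ideal I) \<Longrightarrow> left_ideal (\<Inter> \<I>)"
  unfolding left_ideal_iff by blast

lemma left_ideal_image_mult_right: "left_ideal I \<Longrightarrow> left_ideal ((\<lambda>x. x * a) ` I)"
  unfolding left_ideal_def by (rule lhom_image_submod[OF lmodule_regmod lmodule_regmod lhom_mult_right])

lemma left_ideal_annihilator: "left_ideal {x. x * a = 0}"
  using ker_submod[OF lmodule_regmod lmodule_regmod lhom_mult_right, of a]
  unfolding left_ideal_def ker_def by simp

definition maximal_left_ideal :: "'r::ring_1 set \<Rightarrow> bool" where
  "maximal_left_ideal m \<longleftrightarrow> maxsub (regmod :: ('r, 'r) lmod) m"

lemma maximal_left_ideal_left_ideal: "maximal_left_ideal m \<Longrightarrow> left_ideal m"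
  unfolding maximal_left_ideal_def maxsub_def left_ideal_def by blast

lemma one_notin_maximal_left_ideal: "maximal_left_ideal m \<Longrightarrow> 1 \<notin> m"
  using left_ideal_eq_UNIV maximal_left_ideal_left_ideal
  unfolding maximal_left_ideal_def maxsub_def by fastforce

lemma maximal_left_ideal_add_cyclic:
  assumes "maximal_left_ideal m" "y \<notin> m"
  shows "\<exists>a c. a \<in> m \<and> 1 = a + c * y"
proof -
  have "1 \<in> add_cyclic regmod m y"
    using maxsub_add_cyclic[OF lmodule_regmod _ _ _ assms(2)] assms(1)
    unfolding maximal_left_ideal_def maxsub_def by simp
  then show ?thesis unfolding add_cyclic_def by auto
qed

lemma maximal_left_ideal_comaximal:
  assumes m: "maximal_left_ideal m" and I: "left_ideal I" and not_sub: "\<not> I \<subseteq> m"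
  obtains a b where "a \<in> m" "b \<in> I" "a + b = 1"
proof -
  obtain b where b: "b \<in> I" "b \<notin> m" using not_sub by blast
  obtain a c where "a \<in> m" "1 = a + c * b" using maximal_left_ideal_add_cyclic[OF m b(2)] by blast
  then show ?thesis using that left_ideal_mult[OF I b(1), of c] by simp
qed

definition jacobson :: "'r::ring_1 set" where
  "jacobson = rad (regmod :: ('r, 'r) lmod)"

lemma mem_jacobson_iff: "j \<in> jacobson \<longleftrightarrow> (\<forall>m. maximal_left_ideal m \<longrightarrow> j \<in> m)"
  unfolding jacobson_def rad_def maximal_left_ideal_def by simp

lemma left_ideal_jacobson: "left_ideal (jacobson :: 'r::ring_1 set)"
  unfolding jacobson_def left_ideal_def by (rule rad_submod[OF lmodule_regmod])

lemma jacobson_mult_right: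
  assumes j: "j \<in> jacobson"
  shows "j * r \<in> jacobson"
  unfolding mem_jacobson_iff
proof (intro allI impI)
  fix m :: "'a set" assume "maximal_left_ideal m"
  then have "{x. x * r \<in> m} = UNIV \<or> maximal_left_ideal {x. x * r \<in> m}"
    using maxsub_preimage[OF lmodule_regmod lmodule_regmod lhom_mult_right]
    unfolding maximal_left_ideal_def by simp
  moreover have "j \<in> m'" if "maximal_left_ideal m'" for m'
    using j that unfolding mem_jacobson_iff by blast
  ultimately have "j \<in> {x. x * r \<in> m}" by auto
  then show "j * r \<in> m" by simp
qed

lemma maximal_left_ideal_exists:
  assumes "left_ideal I" "1 \<notin> I"
  shows "\<exists>m. maximal_left_ideal m \<and> I \<subseteq> m"
proof -
  obtain m where m: "I \<subseteq> m" "maximal_avoiding regmod UNIV 1 m"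
    using maximal_avoiding_exists[of regmod I UNIV 1] assms unfolding left_ideal_def by auto
  have "maximal_left_ideal m"
    unfolding maximal_left_ideal_def maxsub_def
    using m(2) left_ideal_eq_UNIV unfolding maximal_avoiding_def left_ideal_def by auto
  then show ?thesis using m(1) by blast
qed

lemma jacobson_left_invertible:
  assumes j: "j \<in> jacobson"
  shows "\<exists>u. u * (1 - j) = 1"
proof (rule ccontr)
  assume "\<not> ?thesis"
  then have "1 \<notin> (\<lambda>x. x * (1 - j)) ` UNIV" by auto
  moreover have "left_ideal ((\<lambda>x. x * (1 - j)) ` UNIV)"
    using left_ideal_image_mult_right[of UNIV] left_ideal_iff by blast
  ultimately obtain m where m: "maximal_left_ideal m" "(\<lambda>x. x * (1 - j)) ` UNIV \<subseteq> m"
    using maximal_left_ideal_exists by blast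
  have "1 - j \<in> m" using m(2) by (metis mult_1 rangeI subsetD)
  moreover have "j \<in> m" using j m(1) unfolding mem_jacobson_iff by blast
  ultimately have "(1 - j) + j \<in> m" by (rule left_ideal_add[OF maximal_left_ideal_left_ideal[OF m(1)]])
  then show False using one_notin_maximal_left_ideal[OF m(1)] by simp
qed

lemma artinian_minimal:
  assumes art: "artinian (regmod :: ('r::ring_1, 'r) lmod)" and ne: "\<F> \<noteq> {}"
    and ideals: "\<And>I. I \<in> \<F> \<Longrightarrow> left_ideal (I :: 'r set)"
  shows "\<exists>I\<in>\<F>. \<forall>I'\<in>\<F>. I' \<subseteq> I \<longrightarrow> I' = I"
proof (rule ccontr)
  assume "\<not> ?thesis"
  then have smaller: "\<exists>I'. I' \<in> \<F> \<and> I' \<subset> I" if "I \<in> \<F>" for I using that by blast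
  define c where "c I = (SOME I'. I' \<in> \<F> \<and> I' \<subset> I)" for I
  have c: "c I \<in> \<F>" "c I \<subset> I" if "I \<in> \<F>" for I
    using someI_ex[OF smaller[OF that]] unfolding c_def by blast+
  obtain I0 where I0: "I0 \<in> \<F>" using ne by blast
  have chain: "(c ^^ n) I0 \<in> \<F>" for n by (induction n) (simp_all add: I0 c)
  have "submod regmod ((c ^^ n) I0) \<and> (c ^^ Suc n) I0 \<subset> (c ^^ n) I0" for n
    using ideals[OF chain] c(2)[OF chain] unfolding left_ideal_def by simp
  then have "\<exists>I. \<forall>n. submod (regmod :: ('r, 'r) lmod) (I n) \<and> I (Suc n) \<subset> I n"
    by (intro exI[of _ "\<lambda>n. (c ^^ n) I0"]) simp
  then show False using art unfolding artinian_def by simp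
qed

lemma jacobson_finite_intersection:
  assumes art: "artinian (regmod :: ('r::ring_1, 'r) lmod)"
  shows "\<exists>ms. (\<forall>m\<in>set ms. maximal_left_ideal m) \<and> \<Inter> (set ms) \<subseteq> (jacobson :: 'r set)"
proof -
  define \<F> where "\<F> = {\<Inter> (set ms) | ms :: 'r set list. \<forall>m\<in>set ms. maximal_left_ideal m}"
  have "UNIV \<in> \<F>" unfolding \<F>_def by (intro CollectI exI[of _ "[]"]) simp
  then have "\<F> \<noteq> {}" by blast
  moreover have "left_ideal I" if I: "I \<in> \<F>" for I
  proof -
    obtain ms where "I = \<Inter> (set ms)" "\<forall>m\<in>set ms. maximal_left_ideal m"
      using I unfolding \<F>_def by blast
    then show ?thesis using maximal_left_ideal_left_ideal left_ideal_Inter by metis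
  qed
  ultimately obtain I where I: "I \<in> \<F>" "\<forall>I'\<in>\<F>. I' \<subseteq> I \<longrightarrow> I' = I"
    using artinian_minimal[OF art] by meson
  obtain ms where ms: "I = \<Inter> (set ms)" "\<forall>m\<in>set ms. maximal_left_ideal m"
    using I(1) unfolding \<F>_def by blast
  have "I \<subseteq> m" if m: "maximal_left_ideal m" for m
  proof -
    have "\<Inter> (set (m # ms)) \<in> \<F>"
      unfolding \<F>_def using ms(2) m by (intro CollectI exI[of _ "m # ms"]) simp
    moreover have "\<Inter> (set (m # ms)) \<subseteq> I" using ms(1) by auto
    ultimately have "m \<inter> I = I" using I(2) ms(1) by simp
    then show ?thesis by blast
  qed
  then have "I \<subseteq> jacobson" by (meson mem_jacobson_iff subsetD subsetI)
  then show ?thesis using ms by blast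
qed

abbreviation ideal_span :: "'r::ring_1 set \<Rightarrow> 'r set" where
  "ideal_span X \<equiv> span (regmod :: ('r, 'r) lmod) X"

lemma left_ideal_ideal_span: "left_ideal (ideal_span X)"
  unfolding left_ideal_def by (rule span_submod[OF lmodule_regmod])

lemma ideal_span_superset: "X \<subseteq> ideal_span X"
  using span_superset[OF lmodule_regmod, of X] by simp

lemma ideal_span_least: "left_ideal I \<Longrightarrow> X \<subseteq> I \<Longrightarrow> ideal_span X \<subseteq> I"
  unfolding left_ideal_def by (rule span_least)

lemma ideal_span_mono: "X \<subseteq> Y \<Longrightarrow> ideal_span X \<subseteq> ideal_span Y"
  using ideal_span_least[OF left_ideal_ideal_span] ideal_span_superset by (metis order_trans)

definition jacobson_prods :: "nat \<Rightarrow> 'r::ring_1 set" where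
  "jacobson_prods k = {prod_list js | js. length js = k \<and> set js \<subseteq> jacobson}"

lemma one_mem_jacobson_prods_0: "1 \<in> jacobson_prods 0"
  unfolding jacobson_prods_def by (intro CollectI exI[of _ "[]"]) simp

lemma mult_mem_jacobson_prods_Suc:
  assumes "j \<in> jacobson" "p \<in> jacobson_prods k"
  shows "j * p \<in> jacobson_prods (Suc k)"
proof -
  obtain js where "p = prod_list js" "length js = k" "set js \<subseteq> jacobson"
    using assms(2) unfolding jacobson_prods_def by blast
  then show ?thesis
    unfolding jacobson_prods_def using assms(1) by (intro CollectI exI[of _ "j # js"]) simp
qed

lemma jacobson_prods_Suc_subset:
  assumes "k \<ge> 1"
  shows "jacobson_prods (Suc k) \<subseteq> (jacobson_prods k :: 'r::ring_1 set)"
proof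
  fix p :: 'r assume "p \<in> jacobson_prods (Suc k)"
  then obtain js where js: "p = prod_list js" "length js = Suc k" "set js \<subseteq> jacobson"
    unfolding jacobson_prods_def by blast
  then obtain j1 j2 rest where "js = j1 # j2 # rest"
    using assms by (metis One_nat_def Suc_le_length_iff length_Suc_conv)
  with js have "p = prod_list ((j1 * j2) # rest)" "length ((j1 * j2) # rest) = k"
    "set ((j1 * j2) # rest) \<subseteq> jacobson"
    using jacobson_mult_right by (auto simp: mult.assoc)
  then show "p \<in> jacobson_prods k" unfolding jacobson_prods_def by blast
qed

lemma jacobson_prods_subset_jacobson:
  assumes "k \<ge> 1"
  shows "jacobson_prods k \<subseteq> (jacobson :: 'r::ring_1 set)"
proof
  fix p :: 'r assume "p \<in> jacobson_prods k"
  then obtain js where js: "p = prod_list js" "length js = k" "set js \<subseteq> jacobson"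
    unfolding jacobson_prods_def by blast
  then obtain j rest where "js = j # rest" using assms by (cases js) auto
  then show "p \<in> jacobson" using js jacobson_mult_right by auto
qed

lemma mem_jacobson_prods_add:
  assumes "x \<in> jacobson_prods (k + l)"
  obtains p q where "p \<in> jacobson_prods k" "q \<in> jacobson_prods l" "x = p * q"
proof -
  obtain js where js: "x = prod_list js" "length js = k + l" "set js \<subseteq> jacobson"
    using assms unfolding jacobson_prods_def by blast
  have "prod_list (take k js) \<in> jacobson_prods k" "prod_list (drop k js) \<in> jacobson_prods l"
    unfolding jacobson_prods_def using js(2,3) set_take_subset[of k js] set_drop_subset[of k js]
    by (intro CollectI exI, auto)+
  moreover have "x = prod_list (take k js) * prod_list (drop k js)"
    using js(1) prod_list.append[of "take k js" "drop k js"] by simp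
  ultimately show ?thesis by (rule that)
qed

lemma jacobson_prods_span_stable:
  assumes art: "artinian (regmod :: ('r::ring_1, 'r) lmod)"
  shows "\<exists>K\<ge>1. ideal_span (jacobson_prods (K + K)) = ideal_span (jacobson_prods K :: 'r set)"
proof -
  define D where "D n = ideal_span (jacobson_prods (Suc n) :: 'r set)" for n
  have D_Suc: "D (Suc n) \<subseteq> D n" for n
    unfolding D_def by (rule ideal_span_mono[OF jacobson_prods_Suc_subset]) simp
  have antimono: "D m \<subseteq> D k" if "k \<le> m" for k m
    using that
  proof (induction m rule: dec_induct)
    case (step m)
    then show ?case using D_Suc[of m] by blast
  qed simp
  have "\<forall>I\<in>range D. left_ideal I" unfolding D_def using left_ideal_ideal_span by blast
  then obtain k where k: "\<forall>I\<in>range D. I \<subseteq> D k \<longrightarrow> I = D k"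
    using artinian_minimal[OF art, of "range D"] by blast
  then have "D (Suc (k + k)) = D k" using antimono[of k "Suc (k + k)"] by simp
  then show ?thesis unfolding D_def by (intro exI[of _ "Suc k"]) simp
qed

text \<open>Otherwise a minimal left ideal L with I L \<noteq> 0 is cyclic, L = \<Lambda>a, and idempotence
  gives I a = L; so a = j a for some j in the radical, and a = 0 as 1 - j is left invertible.\<close>

lemma idempotent_left_ideal_eq_zero:
  fixes I :: "'r::ring_1 set"
  assumes art: "artinian (regmod :: ('r, 'r) lmod)"
    and I: "left_ideal I" and IJ: "I \<subseteq> jacobson"
    and idem: "I \<subseteq> ideal_span {p * q | p q. p \<in> I \<and> q \<in> I}"
  shows "I \<subseteq> {0}"
proof (rule ccontr)
  assume "\<not> I \<subseteq> {0}"
  then obtain i0 where i0: "i0 \<in> I" "i0 \<noteq> 0" by blast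
  define \<F> where "\<F> = {L. left_ideal L \<and> (\<exists>i\<in>I. \<exists>l\<in>L. i * l \<noteq> 0)}"
  have "UNIV \<in> \<F>" unfolding \<F>_def left_ideal_iff using i0 by (simp, metis mult_1_right)
  then have "\<F> \<noteq> {}" by blast
  moreover have F_ideal: "left_ideal L" if "L \<in> \<F>" for L using that unfolding \<F>_def by blast
  ultimately obtain L where L: "L \<in> \<F>" and L_min: "\<forall>L'\<in>\<F>. L' \<subseteq> L \<longrightarrow> L' = L"
    using artinian_minimal[OF art] by blast
  then obtain i1 a where a: "i1 \<in> I" "a \<in> L" "i1 * a \<noteq> 0" unfolding \<F>_def by blast
  have "(\<lambda>r. r * a) ` I \<in> \<F>"
  proof (rule ccontr)
    assume "(\<lambda>r. r * a) ` I \<notin> \<F>"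
    then have "\<not> (\<exists>i\<in>I. \<exists>l\<in>(\<lambda>r. r * a) ` I. i * l \<noteq> 0)"
      using left_ideal_image_mult_right[OF I] unfolding \<F>_def by blast
    then have "{p * q | p q. p \<in> I \<and> q \<in> I} \<subseteq> {x. x * a = 0}"
      by (auto simp: mult.assoc)
    then have "I \<subseteq> {x. x * a = 0}"
      using idem ideal_span_least[OF left_ideal_annihilator] by blast
    then show False using a by blast
  qed
  moreover have "(\<lambda>r. r * a) ` I \<subseteq> L" using left_ideal_mult[OF F_ideal[OF L] a(2)] by blast
  ultimately have "(\<lambda>r. r * a) ` I = L" using L_min by blast
  then obtain j where j: "j \<in> I" "a = j * a" using a(2) by (metis imageE)
  obtain u where u: "u * (1 - j) = 1" using jacobson_left_invertible IJ j(1) by blast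
  have "a = u * ((1 - j) * a)" using u by (simp add: mult.assoc[symmetric])
  also have "(1 - j) * a = 0" using j(2) by (simp add: left_diff_distrib)
  finally show False using a(3) by simp
qed

lemma jacobson_nilpotent:
  assumes art: "artinian (regmod :: ('r::ring_1, 'r) lmod)"
  shows "\<exists>K. (jacobson_prods K :: 'r set) \<subseteq> {0}"
proof -
  obtain K where K: "K \<ge> 1" "ideal_span (jacobson_prods (K + K)) = ideal_span (jacobson_prods K :: 'r set)"
    using jacobson_prods_span_stable[OF art] by blast
  define I where "I = ideal_span (jacobson_prods K :: 'r set)"
  have P: "jacobson_prods K \<subseteq> I" unfolding I_def by (rule ideal_span_superset)
  have IJ: "I \<subseteq> jacobson"
    unfolding I_def by (rule ideal_span_least[OF left_ideal_jacobson jacobson_prods_subset_jacobson[OF K(1)]])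
  have "jacobson_prods (K + K) \<subseteq> {p * q | p q. p \<in> I \<and> q \<in> I}"
  proof
    fix x :: 'r assume "x \<in> jacobson_prods (K + K)"
    then obtain p q where "p \<in> jacobson_prods K" "q \<in> jacobson_prods K" "x = p * q"
      by (rule mem_jacobson_prods_add)
    with P show "x \<in> {p * q | p q. p \<in> I \<and> q \<in> I}" by (intro CollectI exI) auto
  qed
  then have "ideal_span (jacobson_prods (K + K)) \<subseteq> ideal_span {p * q | p q. p \<in> I \<and> q \<in> I}"
    by (rule ideal_span_mono)
  moreover have "ideal_span (jacobson_prods (K + K)) = I" using K(2) unfolding I_def .
  moreover have "left_ideal I" unfolding I_def by (rule left_ideal_ideal_span)
  ultimately have "I \<subseteq> {0}" using idempotent_left_ideal_eq_zero[OF art _ IJ] by simp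
  then show ?thesis using P by blast
qed

lemma jacobson_mult_mem_span:
  assumes x: "x \<in> ideal_span X" and j: "j \<in> jacobson"
  shows "j * x \<in> ideal_span {j' * y | j' y. j' \<in> jacobson \<and> y \<in> (X :: 'r::ring_1 set)}"
proof -
  define T where "T = ideal_span {j' * y | j' y. j' \<in> jacobson \<and> y \<in> X}"
  have T: "left_ideal T" unfolding T_def by (rule left_ideal_ideal_span)
  define Y where "Y = {x. \<forall>j\<in>jacobson. j * x \<in> T}"
  have "left_ideal Y"
    unfolding left_ideal_iff
  proof (intro conjI ballI allI)
    show "0 \<in> Y" unfolding Y_def using left_ideal_zero[OF T] by simp
    show "x + y \<in> Y" if "x \<in> Y" "y \<in> Y" for x y
      using that left_ideal_add[OF T] unfolding Y_def by (simp add: distrib_left)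
    show "r * x \<in> Y" if x: "x \<in> Y" for r x
      unfolding Y_def
    proof (intro CollectI ballI)
      fix j :: 'r assume "j \<in> jacobson"
      then have "j * r \<in> jacobson" by (rule jacobson_mult_right)
      then have "(j * r) * x \<in> T" using x unfolding Y_def by simp
      then show "j * (r * x) \<in> T" by (simp add: mult.assoc)
    qed
  qed
  moreover have "X \<subseteq> Y"
  proof
    fix y assume "y \<in> X"
    then have "j' * y \<in> T" if "j' \<in> jacobson" for j'
      using that ideal_span_superset unfolding T_def by fast
    then show "y \<in> Y" unfolding Y_def by simp
  qed
  ultimately have "ideal_span X \<subseteq> Y" by (rule ideal_span_least)
  with x have "x \<in> Y" by (rule subsetD[rotated])
  then show ?thesis using j unfolding Y_def T_def by simp
qed

lemma subset_span_jacobson_prods_mult: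
  assumes R: "R \<subseteq> ideal_span {j * r | j r. j \<in> jacobson \<and> r \<in> (R :: 'r::ring_1 set)}"
  shows "R \<subseteq> ideal_span {p * r | p r. p \<in> jacobson_prods k \<and> r \<in> R}"
proof (induction k)
  case 0
  have "R \<subseteq> {p * r | p r. p \<in> jacobson_prods 0 \<and> r \<in> R}"
  proof
    fix r assume "r \<in> R"
    then show "r \<in> {p * r | p r. p \<in> jacobson_prods 0 \<and> r \<in> R}"
      using one_mem_jacobson_prods_0 by (intro CollectI exI[of _ 1] exI[of _ r]) simp
  qed
  then show ?case using ideal_span_superset by (rule order_trans)
next
  case (Suc k)
  define S where "S = {p * r | p r. p \<in> jacobson_prods k \<and> r \<in> R}"
  have "{j' * y | j' y. j' \<in> jacobson \<and> y \<in> S} \<subseteq> {p * r | p r. p \<in> jacobson_prods (Suc k) \<and> r \<in> R}"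
  proof
    fix x assume "x \<in> {j' * y | j' y. j' \<in> jacobson \<and> y \<in> S}"
    then obtain j p r where x: "x = j * (p * r)" "j \<in> jacobson" "p \<in> jacobson_prods k" "r \<in> R"
      unfolding S_def by blast
    then have "j * p \<in> jacobson_prods (Suc k)" "x = (j * p) * r"
      using mult_mem_jacobson_prods_Suc by (simp_all add: mult.assoc)
    then show "x \<in> {p * r | p r. p \<in> jacobson_prods (Suc k) \<and> r \<in> R}" using x(4) by blast
  qed
  then have step: "ideal_span {j' * y | j' y. j' \<in> jacobson \<and> y \<in> S}
      \<subseteq> ideal_span {p * r | p r. p \<in> jacobson_prods (Suc k) \<and> r \<in> R}"
    by (rule ideal_span_mono)
  have "{j * r | j r. j \<in> jacobson \<and> r \<in> R}
      \<subseteq> ideal_span {p * r | p r. p \<in> jacobson_prods (Suc k) \<and> r \<in> R}"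
  proof
    fix x assume "x \<in> {j * r | j r. j \<in> jacobson \<and> r \<in> R}"
    then obtain j r where x: "x = j * r" "j \<in> jacobson" "r \<in> R" by blast
    have "r \<in> ideal_span S" using Suc x(3) unfolding S_def by blast
    then have "x \<in> ideal_span {j' * y | j' y. j' \<in> jacobson \<and> y \<in> S}"
      unfolding x(1) using x(2) by (rule jacobson_mult_mem_span)
    then show "x \<in> ideal_span {p * r | p r. p \<in> jacobson_prods (Suc k) \<and> r \<in> R}"
      using step by (rule subsetD[rotated])
  qed
  then have "ideal_span {j * r | j r. j \<in> jacobson \<and> r \<in> R}
      \<subseteq> ideal_span {p * r | p r. p \<in> jacobson_prods (Suc k) \<and> r \<in> R}"
    by (rule ideal_span_least[OF left_ideal_ideal_span])
  with R show ?case by (rule order_trans)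
qed

lemma jacobson_nakayama:
  assumes art: "artinian (regmod :: ('r::ring_1, 'r) lmod)"
    and R: "R \<subseteq> ideal_span {j * r | j r. j \<in> jacobson \<and> r \<in> (R :: 'r set)}"
  shows "R \<subseteq> {0}"
proof -
  obtain K where K: "jacobson_prods K \<subseteq> ({0} :: 'r set)" using jacobson_nilpotent[OF art] by blast
  have "{p * r | p r. p \<in> jacobson_prods K \<and> r \<in> R} \<subseteq> {0}" using K by auto
  moreover have "left_ideal ({0} :: 'r set)" unfolding left_ideal_iff by simp
  ultimately have "ideal_span {p * r | p r. p \<in> jacobson_prods K \<and> r \<in> R} \<subseteq> {0}"
    by (intro ideal_span_least)
  then show ?thesis using subset_span_jacobson_prods_mult[OF R, of K] by (rule order_trans[rotated])
qed

lemma add_cyclic_regmod: "add_cyclic regmod L z = {l + c * z | l c. l \<in> L}"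
  by (simp add: add_cyclic_def)

context
  fixes N L :: "'r::ring_1 set" and x :: 'r
  assumes N: "left_ideal N" and L: "maximal_avoiding regmod N x L"
begin

lemma maximal_avoiding_left_ideal: "left_ideal L"
  using L unfolding maximal_avoiding_def left_ideal_def by blast

lemma maximal_avoiding_notin: "x \<notin> L"
  using L unfolding maximal_avoiding_def by blast

lemma left_ideal_add_cyclic: "left_ideal (add_cyclic regmod L x)"
  using submod_add_cyclic[OF lmodule_regmod, of L x] maximal_avoiding_left_ideal
  unfolding left_ideal_def by simp

lemma subset_add_cyclic_regmod: "L \<subseteq> add_cyclic regmod L x"
  using subset_add_cyclic[OF lmodule_regmod, of L x] maximal_avoiding_left_ideal
  unfolding left_ideal_def by simp

lemma mem_add_cyclic_if_maximal_annihilates: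
  assumes m: "maximal_left_ideal m" and u: "u \<in> N" and ann: "\<And>r. r \<in> m \<Longrightarrow> r * u \<in> L"
  shows "u \<in> add_cyclic regmod L x"
proof (cases "u \<in> L")
  case True
  then show ?thesis
    using subset_add_cyclic_regmod by blast
next
  case False
  have "x \<in> add_cyclic regmod L u"
    using mem_add_cyclic_if_maximal_avoiding[OF lmodule_regmod _ L u False] N
    unfolding left_ideal_def .
  then obtain l s where ls: "l \<in> L" "x = l + s * u" unfolding add_cyclic_regmod by blast
  have "s \<notin> m"
  proof
    assume "s \<in> m"
    then have "x \<in> L" using ls ann left_ideal_add[OF maximal_avoiding_left_ideal] by simp
    then show False using maximal_avoiding_notin by contradiction
  qed
  then obtain a c where ac: "a \<in> m" "1 = a + c * s" using maximal_left_ideal_add_cyclic[OF m] by blast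
  have "u = (a + c * s) * u" using ac(2) by simp
  also have "\<dots> = (a * u - c * l) + c * x" using ls(2) by (simp add: algebra_simps)
  finally have "u = (a * u - c * l) + c * x" .
  moreover have "a * u - c * l \<in> L"
    using ann[OF ac(1)] left_ideal_mult[OF maximal_avoiding_left_ideal ls(1)]
    by (rule left_ideal_diff[OF maximal_avoiding_left_ideal])
  ultimately show ?thesis unfolding add_cyclic_regmod by blast
qed

lemma mem_add_cyclic_if_intersection_annihilates:
  "\<forall>m\<in>set ms. maximal_left_ideal m \<Longrightarrow> u \<in> N \<Longrightarrow> (\<And>r. r \<in> \<Inter> (set ms) \<Longrightarrow> r * u \<in> L) \<Longrightarrow>
    u \<in> add_cyclic regmod L x"
proof (induction ms arbitrary: u)
  case Nil
  then have "u \<in> L" using Nil(3)[of 1] by simp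
  then show ?case
    using subset_add_cyclic_regmod by blast
next
  case (Cons m ms)
  have m: "maximal_left_ideal m" and ms: "\<forall>m\<in>set ms. maximal_left_ideal m"
    using Cons.prems(1) by simp_all
  have lm: "left_ideal m" by (rule maximal_left_ideal_left_ideal[OF m])
  have lms: "left_ideal (\<Inter> (set ms))" using ms maximal_left_ideal_left_ideal by (blast intro: left_ideal_Inter)
  have ann: "r * u \<in> L" if "r \<in> m" "r \<in> \<Inter> (set ms)" for r
    using Cons.prems(3) that by simp
  show ?case
  proof (cases "\<Inter> (set ms) \<subseteq> m")
    case True
    then show ?thesis using Cons.IH[OF ms Cons.prems(2)] ann by blast
  next
    case False
    then obtain a b' where ac: "a \<in> m" and b': "b' \<in> \<Inter> (set ms)" "a + b' = 1"
      by (rule maximal_left_ideal_comaximal[OF m lms])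
    have "a * u \<in> add_cyclic regmod L x"
    proof (rule Cons.IH[OF ms left_ideal_mult[OF N Cons.prems(2)]])
      fix r assume r: "r \<in> \<Inter> (set ms)"
      have "r * a = r - r * b'" using b'(2) by (metis add_diff_cancel_right' distrib_left mult.right_neutral)
      then have "r * a \<in> \<Inter> (set ms)" using left_ideal_diff[OF lms r left_ideal_mult[OF lms b'(1)]] by simp
      then show "r * (a * u) \<in> L" using ann left_ideal_mult[OF lm ac(1)] by (simp add: mult.assoc[symmetric])
    qed
    moreover have "b' * u \<in> add_cyclic regmod L x"
    proof (rule mem_add_cyclic_if_maximal_annihilates[OF m left_ideal_mult[OF N Cons.prems(2)]])
      fix r assume r: "r \<in> m"
      have "r * b' = r - r * a" using b'(2) by (metis add_diff_cancel_left' distrib_left mult.right_neutral)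
      then have "r * b' \<in> m" using left_ideal_diff[OF lm r left_ideal_mult[OF lm ac(1)]] by simp
      then show "r * (b' * u) \<in> L" using ann left_ideal_mult[OF lms b'(1)] by (simp add: mult.assoc[symmetric])
    qed
    ultimately have "a * u + b' * u \<in> add_cyclic regmod L x"
      by (rule left_ideal_add[OF left_ideal_add_cyclic])
    then show ?thesis using b'(2) by (simp add: distrib_right[symmetric])
  qed
qed

end

text \<open>Pick x in N outside J N (Nakayama) and a submodule L maximal among those containing J N and
  avoiding x. Writing the Jacobson radical as a finite intersection of maximal left ideals shows
  N = L + \<Lambda>x, whence L is a maximal submodule of N.\<close>

lemma left_ideal_has_maxsub:
  assumes art: "artinian (regmod :: ('r::ring_1, 'r) lmod)"
    and N: "left_ideal N" and nonzero: "N \<noteq> {0}"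
  shows "\<exists>L. maxsub (sub (regmod :: ('r, 'r) lmod) N) L"
proof -
  define B where "B = ideal_span {j * r | j r. j \<in> jacobson \<and> r \<in> (N :: 'r set)}"
  have BN: "B \<subseteq> N"
    unfolding B_def using left_ideal_mult[OF N] by (intro ideal_span_least[OF N]) blast
  have "\<not> N \<subseteq> B"
  proof
    assume "N \<subseteq> B"
    then have "N \<subseteq> {0}" unfolding B_def by (rule jacobson_nakayama[OF art])
    then show False using nonzero left_ideal_zero[OF N] by blast
  qed
  then obtain x where x: "x \<in> N" "x \<notin> B" by blast
  obtain L where BL: "B \<subseteq> L" and L: "maximal_avoiding regmod N x L"
    using maximal_avoiding_exists[of regmod B N x] left_ideal_ideal_span BN x(2)
    unfolding B_def left_ideal_def by blast
  obtain ms where ms: "\<forall>m\<in>set ms. maximal_left_ideal m" "\<Inter> (set ms) \<subseteq> (jacobson :: 'r set)"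
    using jacobson_finite_intersection[OF art] by blast
  have "N \<subseteq> add_cyclic regmod L x"
  proof
    fix y assume y: "y \<in> N"
    have "r * y \<in> L" if "r \<in> \<Inter> (set ms)" for r
    proof -
      have "r * y \<in> {j * r | j r. j \<in> jacobson \<and> r \<in> N}"
        using that ms(2) y by (intro CollectI exI[of _ r] exI[of _ y]) auto
      then have "r * y \<in> B" using ideal_span_superset unfolding B_def by (rule subsetD[rotated])
      then show ?thesis using BL by (rule subsetD[rotated])
    qed
    then show "y \<in> add_cyclic regmod L x"
      by (rule mem_add_cyclic_if_intersection_annihilates[OF N L ms(1) y])
  qed
  then have "maxsub (sub regmod N) L"
    using maxsub_if_maximal_avoiding[OF lmodule_regmod _ L x(1)] N unfolding left_ideal_def by blast
  then show ?thesis by blast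
qed

lemma tS_vanishes_at_regmod:
  fixes \<S> :: "('r::ring_1) umod set"
  assumes art: "artinian (regmod :: ('r, 'r) lmod)"
  shows "\<exists>i. tS_vanishes_at \<S> (regmod :: ('r, 'r) lmod) i"
proof -
  define I where "I n = (rad_tS \<S> (regmod :: ('r, 'r) lmod) ^^ n) UNIV" for n
  have sI: "submod regmod (I n)" for n
    using submod_rad_tS_iter[OF lmodule_regmod] unfolding I_def by simp
  have dec: "I (Suc n) \<subseteq> tS \<S> (sub regmod (I n))" "tS \<S> (sub regmod (I n)) \<subseteq> I n" for n
    unfolding I_def using rad_tS_subset_tS tS_sub_subset by simp_all
  have "\<exists>n. I (Suc n) = I n"
  proof (rule ccontr)
    assume "\<nexists>n. I (Suc n) = I n"
    then have "\<forall>n. submod regmod (I n) \<and> I (Suc n) \<subset> I n" using sI dec by blast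
    then show False using art unfolding artinian_def by (metis (no_types))
  qed
  then obtain n where n: "I (Suc n) = I n" by blast
  then have T: "tS \<S> (sub regmod (I n)) = I n" using dec[of n] by blast
  have "I n = {0}"
  proof (rule ccontr)
    assume "I n \<noteq> {0}"
    then obtain L where L: "maxsub (sub regmod (I n)) L"
      using left_ideal_has_maxsub[OF art] sI[of n] unfolding left_ideal_def by blast
    have "I n = rad (sub regmod (I n))"
      using n T unfolding I_def rad_tS_def by simp
    also have "\<dots> \<subseteq> L" using L by (rule rad_subset_maxsub)
    finally show False
      using L submod_subset_carrier[of "sub regmod (I n)" L] unfolding maxsub_def by auto
  qed
  then have "tS_vanishes_at \<S> regmod n" using T unfolding tS_vanishes_at_def I_def by simp
  then show ?thesis by blast
qed

section \<open>Free modules and projective modules\<close>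

definition transport :: "('r, 'm) lmod \<Rightarrow> ('m \<Rightarrow> 'n) \<Rightarrow> ('r, 'n) lmod" where
  "transport N e = \<lparr>mcarrier = e ` mcarrier N,
     madd = \<lambda>a b. e (madd N (inv_into (mcarrier N) e a) (inv_into (mcarrier N) e b)),
     mzero = e (mzero N),
     msmult = \<lambda>r a. e (msmult N r (inv_into (mcarrier N) e a))\<rparr>"

lemma transport_simps:
  "mcarrier (transport N e) = e ` mcarrier N" "mzero (transport N e) = e (mzero N)"
  "madd (transport N e) a b = e (madd N (inv_into (mcarrier N) e a) (inv_into (mcarrier N) e b))"
  "msmult (transport N e) r a = e (msmult N r (inv_into (mcarrier N) e a))"
  by (simp_all add: transport_def)

context
  fixes N :: "('r::ring_1, 'm) lmod" and e :: "'m \<Rightarrow> 'n"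
  assumes N: "lmodule N" and inj: "inj_on e (mcarrier N)"
begin

lemma inv_into_transport [simp]: "x \<in> mcarrier N \<Longrightarrow> inv_into (mcarrier N) e (e x) = x"
  using inj by (simp add: inv_into_f_f)

lemma lmodule_transport: "lmodule (transport N e)"
  unfolding lmodule_def transport_simps using N
  by (simp add: madd_assoc madd_comm[OF N] madd_neg msmult_madd_distrib msmult_add_distrib msmult_mult)

lemma lhom_transport: "lhom N (transport N e) e"
  unfolding lhom_def transport_simps using N by auto

lemma lhom_transport_inv: "lhom (transport N e) N (inv_into (mcarrier N) e)"
  unfolding lhom_def transport_simps using N by auto

end

definition free_module :: "nat \<Rightarrow> ('r::ring_1, nat \<Rightarrow> 'r) lmod" where
  "free_module n = \<lparr>mcarrier = {v. \<forall>i\<ge>n. v i = 0}, madd = \<lambda>v w i. v i + w i,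
     mzero = \<lambda>i. 0, msmult = \<lambda>r v i. r * v i\<rparr>"

lemma free_module_simps [simp]:
  "mcarrier (free_module n) = {v. \<forall>i\<ge>n. v i = 0}" "madd (free_module n) = (\<lambda>v w i. v i + w i)"
  "mzero (free_module n) = (\<lambda>i. 0)" "msmult (free_module n) = (\<lambda>r v i. r * v i)"
  by (simp_all add: free_module_def)

lemma lmodule_free_module: "lmodule (free_module n :: ('r::ring_1, nat \<Rightarrow> 'r) lmod)"
  unfolding lmodule_def by (simp add: algebra_simps)

lemma lhom_free_module_coordinate: "lhom (free_module n) (regmod :: ('r::ring_1, 'r) lmod) (\<lambda>v. v i)"
  unfolding lhom_def by simp

fun lin_comb :: "('r::ring_1, 'm) lmod \<Rightarrow> 'm list \<Rightarrow> (nat \<Rightarrow> 'r) \<Rightarrow> nat \<Rightarrow> 'm" where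
  "lin_comb N as v 0 = mzero N"
| "lin_comb N as v (Suc k) = madd N (lin_comb N as v k) (msmult N (v k) (as ! k))"

lemma lin_comb_mem: "submod N Y \<Longrightarrow> set as \<subseteq> Y \<Longrightarrow> k \<le> length as \<Longrightarrow> lin_comb N as v k \<in> Y"
  by (induction k) (auto simp: submod_def subset_iff)

context
  fixes N :: "('r::ring_1, 'm) lmod" and as :: "'m list"
  assumes N: "lmodule N" and as: "set as \<subseteq> mcarrier N"
begin

lemma lin_comb_closed: "k \<le> length as \<Longrightarrow> lin_comb N as v k \<in> mcarrier N"
  by (rule lin_comb_mem[OF carrier_submod[OF N] as])

lemma lin_comb_add:
  "k \<le> length as \<Longrightarrow> lin_comb N as (\<lambda>i. v i + w i) k = madd N (lin_comb N as v k) (lin_comb N as w k)"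
proof (induction k)
  case (Suc k)
  have ak: "as ! k \<in> mcarrier N" using Suc.prems as by (simp add: subset_iff)
  have c: "lin_comb N as v k \<in> mcarrier N" "lin_comb N as w k \<in> mcarrier N"
    using lin_comb_closed Suc.prems by simp_all
  show ?case
    using Suc madd_swap_middle[OF N c(1) _ c(2)] msmult_add_distrib[OF N ak] N ak by simp
qed (use N in simp)

lemma lin_comb_smult:
  "k \<le> length as \<Longrightarrow> lin_comb N as (\<lambda>i. r * v i) k = msmult N r (lin_comb N as v k)"
proof (induction k)
  case (Suc k)
  have ak: "as ! k \<in> mcarrier N" using Suc.prems as by (simp add: subset_iff)
  have c: "lin_comb N as v k \<in> mcarrier N" using lin_comb_closed Suc.prems by simp
  show ?case using Suc msmult_madd_distrib[OF N c] msmult_mult[OF N ak] N ak by simp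
qed (use N in simp)

lemma lin_comb_unit:
  "k \<le> length as \<Longrightarrow> lin_comb N as (\<lambda>i. if i = j then 1 else 0) k = (if j < k then as ! j else mzero N)"
proof (induction k)
  case (Suc k)
  have ak: "as ! k \<in> mcarrier N" using Suc.prems as by (simp add: subset_iff)
  have "lin_comb N as (\<lambda>i. if i = j then 1 else 0) k \<in> mcarrier N"
    using lin_comb_closed Suc.prems by simp
  then show ?case using Suc N ak by (cases "k = j") simp_all
qed simp

end

lemma lin_comb_free_module_units:
  "k \<le> n \<Longrightarrow> lin_comb (free_module n) (map (\<lambda>j i. if i = j then (1::'r::ring_1) else 0) [0..<n]) v k =
    (\<lambda>i. if i < k then v i else 0)"
  by (induction k) (auto simp: fun_eq_iff less_Suc_eq)

lemma fin_gen_free_module: "fin_gen (free_module n :: ('r::ring_1, nat \<Rightarrow> 'r) lmod)"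
proof -
  define E :: "(nat \<Rightarrow> 'r) list" where "E = map (\<lambda>j i. if i = j then 1 else 0) [0..<n]"
  have E: "set E \<subseteq> mcarrier (free_module n)" unfolding E_def by auto
  have "v \<in> span (free_module n) (set E)" if v: "v \<in> mcarrier (free_module n)" for v
  proof -
    have "v = lin_comb (free_module n) E v n"
      using v lin_comb_free_module_units[of n n v] unfolding E_def by (auto simp: fun_eq_iff)
    also have "\<dots> \<in> span (free_module n) (set E)"
      by (rule lin_comb_mem[OF span_submod[OF lmodule_free_module] span_superset[OF lmodule_free_module E]])
        (simp add: E_def)
    finally show ?thesis .
  qed
  then have "mcarrier (free_module n) \<subseteq> span (free_module n) (set E)" by blast
  then have "span (free_module n) (set E) = mcarrier (free_module n)"
    using span_subset_carrier by (rule antisym[rotated])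
  then show ?thesis unfolding fin_gen_def using E by (intro exI[of _ "set E"]) simp
qed

lemma fin_gen_free_module_surj:
  assumes P: "lmodule P" and fg: "fin_gen P"
  shows "\<exists>n \<pi>. lhom (free_module n :: ('r::ring_1, nat \<Rightarrow> 'r) lmod) (P :: ('r, 'p) lmod) \<pi> \<and>
    \<pi> ` mcarrier (free_module n) = mcarrier P"
proof -
  obtain A where A: "finite A" "A \<subseteq> mcarrier P" "span P A = mcarrier P"
    using fg unfolding fin_gen_def by blast
  obtain as where as: "set as = A" using finite_list[OF A(1)] by blast
  define n where "n = length as"
  define \<pi> where "\<pi> v = lin_comb P as v n" for v :: "nat \<Rightarrow> 'r"
  have asP: "set as \<subseteq> mcarrier P" using as A by simp
  have h: "lhom (free_module n) P \<pi>"
    unfolding lhom_def \<pi>_def n_def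
    using lin_comb_closed[OF P asP] lin_comb_add[OF P asP] lin_comb_smult[OF P asP] by simp
  have "A \<subseteq> \<pi> ` mcarrier (free_module n)"
  proof
    fix a assume "a \<in> A"
    then have "a \<in> set as" using as by simp
    then obtain j where j: "j < n" "a = as ! j" unfolding n_def by (metis in_set_conv_nth)
    then have "a = \<pi> (\<lambda>i. if i = j then 1 else 0)"
      unfolding \<pi>_def using lin_comb_unit[OF P asP, of n j] by (simp add: n_def)
    moreover have "(\<lambda>i. if i = j then (1::'r) else 0) \<in> mcarrier (free_module n)" using j by auto
    ultimately show "a \<in> \<pi> ` mcarrier (free_module n)" by blast
  qed
  then have "span P A \<subseteq> \<pi> ` mcarrier (free_module n)"
    by (rule span_least[OF lhom_image_submod[OF lmodule_free_module P h carrier_submod[OF lmodule_free_module]]])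
  then have "mcarrier P \<subseteq> \<pi> ` mcarrier (free_module n)" by (simp only: A(3))
  then have "\<pi> ` mcarrier (free_module n) = mcarrier P" using lhom_closed[OF h] by blast
  with h show ?thesis by (intro exI[of _ n] exI[of _ \<pi>] conjI)
qed

text \<open>The fibres of a surjection from a free module of finite rank are elements of
  (nat => 'r) set, so every finitely generated module has an isomorphic copy in 'r umod.\<close>

lemma umod_copy_exists:
  fixes P :: "('r::ring_1, 'p) lmod"
  assumes P: "lmodule P" and fg: "fin_gen P"
  obtains B :: "'r umod" and e where "lmodule B" "fin_gen B" "inj_on e (mcarrier P)" "lhom P B e"
    "lhom B P (inv_into (mcarrier P) e)" "e ` mcarrier P = mcarrier B"
proof -
  obtain n \<pi> where \<pi>: "lhom (free_module n :: ('r, nat \<Rightarrow> 'r) lmod) P \<pi>"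
      "\<pi> ` mcarrier (free_module n) = mcarrier P"
    using fin_gen_free_module_surj[OF P fg] by blast
  define e where "e x = {v \<in> mcarrier (free_module n :: ('r, nat \<Rightarrow> 'r) lmod). \<pi> v = x}" for x
  have inj: "inj_on e (mcarrier P)"
  proof (rule inj_onI)
    fix x y assume "x \<in> mcarrier P" "y \<in> mcarrier P" "e x = e y"
    then show "x = y" using \<pi>(2) unfolding e_def by (metis (mono_tags, lifting) imageE mem_Collect_eq)
  qed
  have B: "lmodule (transport P e)" "lhom P (transport P e) e"
    "e ` mcarrier P = mcarrier (transport P e)"
    using lmodule_transport[OF P inj] lhom_transport[OF P inj] by (simp_all add: transport_simps)
  show ?thesis
  proof (rule that[OF B(1) _ inj B(2) lhom_transport_inv[OF P inj] B(3)])
    show "fin_gen (transport P e)" by (rule fin_gen_surj_image[OF P B(1,2) B(3) fg])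
  qed
qed

text \<open>The lifting property is only available against maps between modules of type 'r umod,
  so the split surjection onto P is built between copies of a free module and of P in that type.\<close>

lemma projective_free_embedding:
  fixes P :: "('r::ring_1, 'p) lmod"
  assumes proj: "projective P"
  obtains n and k :: "'p \<Rightarrow> nat \<Rightarrow> 'r" where "lhom P (free_module n) k"
    "\<And>x. x \<in> mcarrier P \<Longrightarrow> k x = mzero (free_module n) \<Longrightarrow> x = mzero P"
proof -
  have P: "lmodule P" and fg: "fin_gen P" using proj unfolding projective_def by auto
  obtain n \<pi> where \<pi>: "lhom (free_module n :: ('r, nat \<Rightarrow> 'r) lmod) P \<pi>"
      "\<pi> ` mcarrier (free_module n) = mcarrier P"
    using fin_gen_free_module_surj[OF P fg] by blast
  define F where "F = (free_module n :: ('r, nat \<Rightarrow> 'r) lmod)"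
  have F: "lmodule F" "fin_gen F" unfolding F_def by (rule lmodule_free_module, rule fin_gen_free_module)
  obtain B :: "'r umod" and e where B: "lmodule B" "fin_gen B" "inj_on e (mcarrier P)" "lhom P B e"
      "lhom B P (inv_into (mcarrier P) e)" "e ` mcarrier P = mcarrier B"
    by (rule umod_copy_exists[OF P fg])
  obtain A :: "'r umod" and s where A: "lmodule A" "fin_gen A" "inj_on s (mcarrier F)" "lhom F A s"
      "lhom A F (inv_into (mcarrier F) s)" "s ` mcarrier F = mcarrier A"
    by (rule umod_copy_exists[OF F])
  define s' where "s' = inv_into (mcarrier F) s"
  define g where "g = e \<circ> \<pi> \<circ> s'"
  have g: "lhom A B g"
    unfolding g_def s'_def using lhom_comp[OF lhom_comp[OF A(5) \<pi>(1)[folded F_def]] B(4)]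
    by (simp add: comp_assoc)
  have "s' ` mcarrier A = mcarrier F"
    unfolding s'_def A(6)[symmetric] using A(3) by (simp add: image_image)
  then have "g ` mcarrier A = mcarrier B"
    unfolding g_def image_comp[symmetric] using \<pi>(2) B(6) unfolding F_def by simp
  then have "\<exists>k. lhom P A k \<and> (\<forall>x\<in>mcarrier P. g (k x) = e x)"
    using proj A(1,2) B(1,2) g B(4) unfolding projective_def by blast
  then obtain k where k: "lhom P A k" "\<And>x. x \<in> mcarrier P \<Longrightarrow> g (k x) = e x" by blast
  have "lhom P F (s' \<circ> k)" unfolding s'_def by (rule lhom_comp[OF k(1) A(5)])
  moreover have "x = mzero P" if x: "x \<in> mcarrier P" "(s' \<circ> k) x = mzero F" for x
  proof -
    have "k x = mzero A"
      using x(2) lhom_closed[OF k(1) x(1)] A(6) lhom_zero[OF F(1) A(1) A(4)] unfolding s'_def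
      by (metis comp_apply f_inv_into_f)
    then have "e x = e (mzero P)"
      using k(2)[OF x(1)] lhom_zero[OF A(1) B(1) g] lhom_zero[OF P B(1) B(4)] by simp
    then show ?thesis using B(3) x(1) by (meson inj_onD mzero_closed[OF P])
  qed
  ultimately show ?thesis using that unfolding F_def by blast
qed

lemma projective_cogenerated_by_regmod:
  assumes proj: "projective (P :: ('r::ring_1, 'p) lmod)"
  shows "cogenerated_by P (regmod :: ('r, 'r) lmod)"
  unfolding cogenerated_by_def
proof (intro ballI impI)
  obtain n and k :: "'p \<Rightarrow> nat \<Rightarrow> 'r" where k: "lhom P (free_module n) k"
      "\<And>x. x \<in> mcarrier P \<Longrightarrow> k x = mzero (free_module n) \<Longrightarrow> x = mzero P"
    using projective_free_embedding[OF proj] by metis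
  fix x assume "x \<in> mcarrier P" "x \<noteq> mzero P"
  then obtain i where "k x i \<noteq> 0" using k(2) by (auto simp: fun_eq_iff)
  moreover have "lhom P regmod ((\<lambda>v. v i) \<circ> k)"
    by (rule lhom_comp[OF k(1) lhom_free_module_coordinate])
  ultimately show "\<exists>h. lhom P regmod h \<and> h x \<noteq> mzero regmod" by auto
qed

lemma tS_eq_carrier:
  fixes \<S> :: "('r::ring_1) umod set" and P :: "('r, 'p) lmod"
  assumes P: "lmodule P" and fg: "fin_gen P"
    and zero: "\<And>(X :: 'r umod) g. in_X \<S> X \<Longrightarrow> lhom P X g \<Longrightarrow> \<forall>x\<in>mcarrier P. g x = mzero X"
  shows "tS \<S> P = mcarrier P"
proof -
  obtain B :: "'r umod" and e where B: "lmodule B" "fin_gen B" "inj_on e (mcarrier P)" "lhom P B e"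
      "lhom B P (inv_into (mcarrier P) e)" "e ` mcarrier P = mcarrier B"
    by (rule umod_copy_exists[OF P fg])
  have "in_T \<S> B"
    unfolding in_T_def
  proof (intro allI impI ballI)
    fix X :: "'r umod" and h b assume X: "in_X \<S> X" and h: "lhom B X h" and b: "b \<in> mcarrier B"
    obtain x where x: "x \<in> mcarrier P" "b = e x" using b B(6) by blast
    have "(h \<circ> e) x = mzero X" using zero[OF X lhom_comp[OF B(4) h]] x(1) by blast
    then show "h b = mzero X" using x(2) by simp
  qed
  then have "inv_into (mcarrier P) e ` mcarrier B \<subseteq> T_images \<S> P" using B(1,2,5) by blast
  moreover have "inv_into (mcarrier P) e ` mcarrier B = mcarrier P"
    unfolding B(6)[symmetric] using B(3) by (simp add: image_image)
  ultimately have "mcarrier P \<subseteq> tS \<S> P" using T_images_subset_tS[OF P, of \<S>] by simp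
  then show ?thesis using tS_subset_carrier by (rule antisym[rotated])
qed

section \<open>Projective covers of t_S(M)\<close>

lemma proj_cover_lhom_simple_zero:
  fixes \<S> :: "('r::ring_1) umod set" and M :: "('r, 'm) lmod" and P :: "('r, 'p) lmod"
  assumes M: "lmodule M" and cover: "proj_cover P (sub M (tS \<S> M)) f"
    and simple: "simple_mod S" and S: "S \<in> \<S>" and q: "lhom P S q"
  shows "\<forall>p\<in>mcarrier P. q p = mzero S"
proof -
  define T where "T = sub M (tS \<S> M)"
  have LT: "lmodule T" unfolding T_def by (rule submod_lmodule[OF M tS_submod[OF M]])
  have LS: "lmodule S" using simple unfolding simple_mod_def by blast
  have P: "lmodule P" and f: "lhom P T f" and surj: "f ` mcarrier P = mcarrier T"
    and sup: "superfluous P (ker P T f)"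
    using cover unfolding proj_cover_def projective_def T_def by auto
  have "ker P S q = {x \<in> mcarrier P. q x \<in> {mzero S}}" unfolding ker_def by simp
  then consider "ker P S q = mcarrier P" | "maxsub P (ker P S q)"
    using maxsub_preimage[OF P LS q maxsub_zero_simple[OF simple]] by auto
  then show ?thesis
  proof cases
    case 1
    then show ?thesis unfolding ker_def by blast
  next
    case 2
    have "ker P T f \<subseteq> ker P S q"
      using superfluous_subset_rad[OF P sup] rad_subset_maxsub[OF 2] by blast
    then obtain q' where q': "lhom T S q'" "\<And>p. p \<in> mcarrier P \<Longrightarrow> q' (f p) = q p"
      using lhom_factor_through_surj[OF P LT LS f surj q] by metis
    have "\<forall>y\<in>tS \<S> M. q' y = mzero S"
      by (rule lhom_tS_to_X_zero[OF M simple_mod_in_X[OF simple S] q'(1)[unfolded T_def]])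
    then show ?thesis using q'(2) lhom_closed[OF f] unfolding T_def by fastforce
  qed
qed

lemma tS_vanishes_at_projective:
  fixes \<S> :: "('r::ring_1) umod set"
  assumes art: "artinian (regmod :: ('r, 'r) lmod)" and proj: "projective P"
  shows "tS_vanishes_at \<S> P (llt \<S> (regmod :: ('r, 'r) lmod))"
proof -
  obtain i where "tS_vanishes_at \<S> (regmod :: ('r, 'r) lmod) i"
    using tS_vanishes_at_regmod[OF art] by blast
  then have "tS_vanishes_at \<S> (regmod :: ('r, 'r) lmod) (llt \<S> regmod)"
    by (rule tS_vanishes_at_llt)
  moreover have "lmodule P" using proj unfolding projective_def by blast
  ultimately show ?thesis
    using tS_vanishes_at_cogenerated lmodule_regmod projective_cogenerated_by_regmod[OF proj] by blast
qed

lemma proj_cover_tS_eq_carrier: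
  fixes \<S> :: "('r::ring_1) umod set" and M :: "('r, 'm) lmod" and P :: "('r, 'p) lmod"
  assumes M: "lmodule M" and simple: "\<forall>S\<in>\<S>. simple_mod S"
    and cover: "proj_cover P (sub M (tS \<S> M)) f"
  shows "tS \<S> P = mcarrier P"
proof (rule tS_eq_carrier)
  show "lmodule P" "fin_gen P" using cover unfolding proj_cover_def projective_def by blast+
  have simple_zero: "\<forall>p\<in>mcarrier P. q p = mzero S" if "S \<in> \<S>" "lhom P S q" for S q
    using proj_cover_lhom_simple_zero[OF M cover] simple that by blast
  fix X :: "'r umod" and g assume "in_X \<S> X" "lhom P X g"
  then show "\<forall>x\<in>mcarrier P. g x = mzero X"
    using filt_in_lhom_zero[OF simple_zero] unfolding in_X_def by blast
qed

theorem lemma4p3: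
  fixes \<S> :: "('r::ring_1) umod set"
    and M :: "('r, 'm) lmod"
    and P :: "('r, 'p) lmod"
    and f :: "'p \<Rightarrow> 'm"
  assumes "artinian (regmod :: ('r, 'r) lmod)"
    and "\<forall>S\<in>\<S>. simple_mod S"
    and "lmodule M" and "fin_gen M"
    and "tS \<S> M \<noteq> {mzero M}"
    and "proj_cover P (sub M (tS \<S> M)) f"
  shows "llt \<S> (sub P (ker P (sub M (tS \<S> M)) f)) + 1 \<le> llt \<S> (regmod :: ('r, 'r) lmod)"
proof -
  note art = assms(1) and M = assms(3) and cover = assms(6)
  define T where "T = sub M (tS \<S> M)"
  define K where "K = ker P T f"
  have proj: "projective P" and P: "lmodule P" and f: "lhom P T f"
    and surj: "f ` mcarrier P = tS \<S> M" and sup: "superfluous P K"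
    using cover unfolding proj_cover_def projective_def T_def K_def by auto
  have T: "lmodule T" unfolding T_def by (rule submod_lmodule[OF M tS_submod[OF M]])
  have tS_P: "tS \<S> P = mcarrier P" by (rule proj_cover_tS_eq_carrier[OF M assms(2) cover])
  have "\<not> tS_vanishes_at \<S> P 0"
  proof
    assume "tS_vanishes_at \<S> P 0"
    then have "mcarrier P = {mzero P}" using tS_P unfolding tS_vanishes_at_def by simp
    then show False using surj lhom_zero[OF P T f] assms(5) unfolding T_def by simp
  qed
  then obtain j where j: "llt \<S> (regmod :: ('r, 'r) lmod) = Suc j" "tS_vanishes_at \<S> P (Suc j)"
    using tS_vanishes_at_projective[OF art proj] by (metis not0_implies_Suc)
  have "tS_vanishes_at \<S> (sub P (rad P)) j" by (rule tS_vanishes_at_Suc_rad[OF P tS_P j(2)])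
  then have "tS_vanishes_at \<S> (sub P K) j"
    by (rule tS_vanishes_at_cogenerated[OF submod_lmodule[OF P ker_submod[OF P T f, folded K_def]]
        submod_lmodule[OF P rad_submod[OF P]] cogenerated_by_sub_mono[OF superfluous_subset_rad[OF P sup]]])
  then show ?thesis using llt_le j(1) unfolding K_def T_def by fastforce
qed

end
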